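(* Let $p\in\mathbb C[z,w]$ be a polynomial with $Z(p)\cap Z(z)\cap\partial\mathbb D^2=\emptyset$, and let $\mathcal M=[p,f_1,\dots,f_n]$ be the submodule of $H^2(\mathbb D^2)$ generated by $p$ and some $f_1,\dots,f_n\in H^2(\mathbb D^2)$. Set $Q=\mathcal M\ominus[p]$ and $T_{z,Q}=P_QM_z|_Q$. Then $\ker T_{z,Q}^*$ is finite dimensional.
   Context: $H^2(\mathbb D^2)$ is the Hardy space of the bidisc, a Hilbert module over $\mathbb C[z,w]$ via multiplication. A submodule is a closed subspace invariant under multiplication by polynomials; $[g_1,\dots,g_m]$ denotes the smallest submodule containing $g_1,\dots,g_m$. $Z(p)$ is the zero set of $p$ in $\mathbb C^2$ and $Z(z)=\{(z,w)\in\mathbb C^2:z=0\}$. *)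

theory Defs
  imports "HOL-Analysis.Analysis"
begin

text \<open>H^2 of the bidisc, modelled (isometrically) by its Taylor coefficient sequences:
  f(z,w) = sum over (i,j) of f(i,j) z^i w^j, with square-summable coefficients.\<close>

type_synonym h2 = "nat \<times> nat \<Rightarrow> complex"

definition H2 :: "h2 set" where
  "H2 = {f. (\<lambda>k. (cmod (f k))\<^sup>2) summable_on UNIV}"

definition h2_inner :: "h2 \<Rightarrow> h2 \<Rightarrow> complex" where
  "h2_inner f g = infsum (\<lambda>k. f k * cnj (g k)) UNIV"

definition h2_norm :: "h2 \<Rightarrow> real" where
  "h2_norm f = sqrt (infsum (\<lambda>k. (cmod (f k))\<^sup>2) UNIV)"

text \<open>Polynomials in C[z,w]: finitely supported coefficient functions.\<close>
definition poly2 :: "h2 set" where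
  "poly2 = {c. finite {k. c k \<noteq> 0}}"

definition poly2_eval :: "h2 \<Rightarrow> complex \<times> complex \<Rightarrow> complex" where
  "poly2_eval c zw = (\<Sum>k\<in>{k. c k \<noteq> 0}. c k * fst zw ^ fst k * snd zw ^ snd k)"

definition Zset :: "h2 \<Rightarrow> (complex \<times> complex) set" where
  "Zset p = {zw. poly2_eval p zw = 0}"

definition bidisc :: "(complex \<times> complex) set" where
  "bidisc = {(z, w). cmod z < 1 \<and> cmod w < 1}"

text \<open>Multiplication of a function by another (Cauchy product of coefficients).\<close>
definition h2_mult :: "h2 \<Rightarrow> h2 \<Rightarrow> h2" where
  "h2_mult p f = (\<lambda>(m, n). \<Sum>i\<le>m. \<Sum>j\<le>n. p (i, j) * f (m - i, n - j))"

definition zpoly :: h2 where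
  "zpoly = (\<lambda>k. if k = (1, 0) then 1 else 0)"

definition is_submodule :: "h2 set \<Rightarrow> bool" where
  "is_submodule S \<longleftrightarrow>
     S \<subseteq> H2 \<and> (\<lambda>_. 0) \<in> S
     \<and> (\<forall>f\<in>S. \<forall>g\<in>S. (\<lambda>k. f k + g k) \<in> S)
     \<and> (\<forall>c. \<forall>f\<in>S. (\<lambda>k. c * f k) \<in> S)
     \<and> (\<forall>x f. (\<forall>n. x n \<in> S) \<and> f \<in> H2 \<and> (\<lambda>n. h2_norm (\<lambda>k. x n k - f k)) \<longlonglongrightarrow> 0
             \<longrightarrow> f \<in> S)
     \<and> (\<forall>q\<in>poly2. \<forall>f\<in>S. h2_mult q f \<in> S)"

definition gen_submodule :: "h2 set \<Rightarrow> h2 set" where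
  "gen_submodule G = \<Inter> {S. is_submodule S \<and> G \<subseteq> S}"

definition ominus :: "h2 set \<Rightarrow> h2 set \<Rightarrow> h2 set" where
  "ominus M N = {x\<in>M. \<forall>y\<in>N. h2_inner x y = 0}"

definition proj :: "h2 set \<Rightarrow> h2 \<Rightarrow> h2" where
  "proj Q x = (THE q. q \<in> Q \<and> (\<forall>y\<in>Q. h2_inner (\<lambda>k. x k - q k) y = 0))"

definition Tz :: "h2 set \<Rightarrow> h2 \<Rightarrow> h2" where
  "Tz Q y = proj Q (h2_mult zpoly y)"

definition adj :: "h2 set \<Rightarrow> (h2 \<Rightarrow> h2) \<Rightarrow> h2 \<Rightarrow> h2" where
  "adj Q T x = (THE u. u \<in> Q \<and> (\<forall>y\<in>Q. h2_inner (T y) x = h2_inner y u))"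

definition kernel_on :: "h2 set \<Rightarrow> (h2 \<Rightarrow> h2) \<Rightarrow> h2 set" where
  "kernel_on Q T = {x\<in>Q. T x = (\<lambda>_. 0)}"

definition fin_dim :: "h2 set \<Rightarrow> bool" where
  "fin_dim K \<longleftrightarrow> (\<exists>B. finite B \<and>
      (\<forall>x\<in>K. \<exists>c::h2 \<Rightarrow> complex. x = (\<lambda>k. \<Sum>b\<in>B. c b * b k)))"

end

theory Submission
  imports Defs "HOL-Computational_Algebra.Polynomial_FPS"
begin

text \<open>Since \<open>T\<^sub>z\<^sup>* = P\<^sub>Q M\<^sub>z\<^sup>*\<close> on \<open>Q\<close> and
  \<open>z [p] \<subseteq> [p]\<close>, a vector of \<open>ker T\<^sub>z\<^sup>*\<close> is an \<open>x \<in> M\<close> orthogonal to \<open>[p]\<close> and to \<open>z M\<close>.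
  The hypothesis on \<open>Z(p)\<close> gives \<open>p(0, 1) \<noteq> 0\<close>, so \<open>p(0, w)\<close> is a nonzero polynomial, say of
  degree \<open>d\<close>. For a polynomial \<open>q\<close>, write \<open>q = q(0, w) + z q'\<close> and divide \<open>q(0, w)\<close> by
  \<open>p(0, w)\<close> in \<open>\<complex>[w]\<close>: this puts \<open>q f\<^sub>i\<close> in \<open>z M + [p] + span {w\<^sup>j f\<^sub>i : j < d}\<close>. Hence an
  \<open>x\<close> as above that is also orthogonal to the \<open>n d\<close> vectors \<open>w\<^sup>j f\<^sub>i\<close> is orthogonal to every
  polynomial multiple of every generator of \<open>M\<close>, hence to \<open>M \<ni> x\<close>, so \<open>x = 0\<close>; thus
  \<open>dim ker T\<^sub>z\<^sup>* \<le> n d\<close>.\<close>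

section \<open>The Hilbert space \<open>H\<^sup>2\<close>\<close>

definition h2_sqnorm :: "h2 \<Rightarrow> real" where
  "h2_sqnorm f = infsum (\<lambda>k. (cmod (f k))\<^sup>2) UNIV"

lemma h2_norm_eq_sqrt_sqnorm: "h2_norm f = sqrt (h2_sqnorm f)"
  by (simp add: h2_norm_def h2_sqnorm_def)

lemma h2_sqnorm_nonneg: "h2_sqnorm f \<ge> 0"
  unfolding h2_sqnorm_def by (rule infsum_nonneg) simp

lemma h2_norm_nonneg: "h2_norm f \<ge> 0"
  by (simp add: h2_norm_eq_sqrt_sqnorm h2_sqnorm_nonneg)

lemma h2_sqnorm_eq_norm_sq: "h2_sqnorm f = (h2_norm f)\<^sup>2"
  by (simp add: h2_norm_eq_sqrt_sqnorm h2_sqnorm_nonneg)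

lemma H2_summable: "f \<in> H2 \<Longrightarrow> (\<lambda>k. (cmod (f k))\<^sup>2) summable_on UNIV"
  by (simp add: H2_def)

lemma H2_zero: "(\<lambda>_. 0) \<in> H2"
  unfolding H2_def by simp

lemma H2_scale: "f \<in> H2 \<Longrightarrow> (\<lambda>k. c * f k) \<in> H2"
  unfolding H2_def by (simp add: norm_mult power_mult_distrib summable_on_cmult_right)

lemma cmod_add_sq_le: "(cmod (a + b))\<^sup>2 \<le> 2 * (cmod a)\<^sup>2 + 2 * (cmod b)\<^sup>2"
proof -
  have "(cmod (a + b))\<^sup>2 \<le> (cmod a + cmod b)\<^sup>2"
    by (simp add: power_mono norm_triangle_ineq)
  also have "\<dots> \<le> 2 * (cmod a)\<^sup>2 + 2 * (cmod b)\<^sup>2"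
    by (smt (verit) sum_squares_bound power2_sum)
  finally show ?thesis .
qed

lemma H2_add: "f \<in> H2 \<Longrightarrow> g \<in> H2 \<Longrightarrow> (\<lambda>k. f k + g k) \<in> H2"
  unfolding H2_def
  by (auto intro!: summable_on_comparison_test[where f="\<lambda>k. 2 * (cmod (f k))\<^sup>2 + 2 * (cmod (g k))\<^sup>2"]
      summable_on_add summable_on_cmult_right cmod_add_sq_le)

lemma H2_diff: "f \<in> H2 \<Longrightarrow> g \<in> H2 \<Longrightarrow> (\<lambda>k. f k - g k) \<in> H2"
  using H2_add[of f "\<lambda>k. (- 1) * g k"] H2_scale[of g "- 1"] by simp

lemma h2_inner_summable:
  assumes "f \<in> H2" "g \<in> H2"
  shows "(\<lambda>k. f k * cnj (g k)) summable_on UNIV"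
proof (rule abs_summable_summable)
  have "(\<lambda>k. (cmod (f k))\<^sup>2 + (cmod (g k))\<^sup>2) summable_on UNIV"
    by (intro summable_on_add H2_summable assms)
  moreover have "norm (f k * cnj (g k)) \<le> (cmod (f k))\<^sup>2 + (cmod (g k))\<^sup>2" for k
    unfolding norm_mult complex_mod_cnj
    using sum_squares_bound[of "cmod (f k)" "cmod (g k)"]
      mult_nonneg_nonneg[OF norm_ge_zero norm_ge_zero, of "f k" "g k"]
    by linarith
  ultimately show "(\<lambda>k. norm (f k * cnj (g k))) summable_on UNIV"
    by (rule summable_on_comparison_test) simp
qed

lemma h2_inner_add_left:
  assumes "f \<in> H2" "g \<in> H2" "h \<in> H2"
  shows "h2_inner (\<lambda>k. f k + g k) h = h2_inner f h + h2_inner g h"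
  unfolding h2_inner_def distrib_right
  by (rule infsum_add; rule h2_inner_summable; fact)

lemma h2_inner_add_right:
  assumes "f \<in> H2" "g \<in> H2" "h \<in> H2"
  shows "h2_inner h (\<lambda>k. f k + g k) = h2_inner h f + h2_inner h g"
  unfolding h2_inner_def complex_cnj_add distrib_left
  by (rule infsum_add; rule h2_inner_summable; fact)

lemma h2_inner_scale_left: "h2_inner (\<lambda>k. c * f k) h = c * h2_inner f h"
  unfolding h2_inner_def
  by (cases "c = 0") (simp_all add: mult.assoc infsum_cmult_right')

lemma h2_inner_scale_right: "h2_inner h (\<lambda>k. c * f k) = cnj c * h2_inner h f"
  unfolding h2_inner_def
  by (cases "c = 0") (simp_all add: mult.left_commute infsum_cmult_right')

lemma h2_inner_commute: "h2_inner g f = cnj (h2_inner f g)"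
  unfolding h2_inner_def infsum_cnj[symmetric] by (simp add: mult.commute)

lemma h2_inner_diff_left:
  assumes "f \<in> H2" "g \<in> H2" "h \<in> H2"
  shows "h2_inner (\<lambda>k. f k - g k) h = h2_inner f h - h2_inner g h"
proof -
  have "h2_inner (\<lambda>k. f k - g k) h = h2_inner (\<lambda>k. f k + (- 1) * g k) h"
    by simp
  also have "\<dots> = h2_inner f h - h2_inner g h"
    using assms by (simp only: h2_inner_add_left H2_scale h2_inner_scale_left) simp
  finally show ?thesis .
qed

lemma h2_inner_diff_right:
  "f \<in> H2 \<Longrightarrow> g \<in> H2 \<Longrightarrow> h \<in> H2 \<Longrightarrow>
    h2_inner h (\<lambda>k. f k - g k) = h2_inner h f - h2_inner h g"
  using h2_inner_diff_left[of f g h] h2_inner_commute[of h] h2_inner_commute[of h f]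
    h2_inner_commute[of h g] by simp

lemma h2_inner_zero_left [simp]: "h2_inner (\<lambda>_. 0) h = 0"
  unfolding h2_inner_def by simp

lemma h2_inner_zero_right [simp]: "h2_inner h (\<lambda>_. 0) = 0"
  unfolding h2_inner_def by simp

lemma h2_inner_self: "f \<in> H2 \<Longrightarrow> h2_inner f f = of_real (h2_sqnorm f)"
proof -
  assume "f \<in> H2"
  then have "((\<lambda>k. of_real ((cmod (f k))\<^sup>2)) has_sum (of_real (h2_sqnorm f) :: complex)) UNIV"
    unfolding h2_sqnorm_def by (intro has_sum_of_real) (simp add: H2_summable)
  moreover have "(\<lambda>k. of_real ((cmod (f k))\<^sup>2)) = (\<lambda>k. f k * cnj (f k))"
    by (metis complex_norm_square of_real_power)
  ultimately show ?thesis unfolding h2_inner_def by (simp add: infsumI)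
qed

lemma h2_sqnorm_eq_0_iff:
  assumes "f \<in> H2"
  shows "h2_sqnorm f = 0 \<longleftrightarrow> f = (\<lambda>_. 0)"
proof
  assume "h2_sqnorm f = 0"
  have "(cmod (f k))\<^sup>2 = 0" for k
    by (rule nonneg_infsum_le_0D[where A=UNIV])
      (use assms \<open>h2_sqnorm f = 0\<close> H2_summable in \<open>auto simp: h2_sqnorm_def\<close>)
  then show "f = (\<lambda>_. 0)" by (simp add: fun_eq_iff)
qed (simp add: h2_sqnorm_def)

lemma h2_inner_self_eq_0_iff: "f \<in> H2 \<Longrightarrow> h2_inner f f = 0 \<longleftrightarrow> f = (\<lambda>_. 0)"
  by (simp add: h2_inner_self h2_sqnorm_eq_0_iff)

lemma h2_sqnorm_diff_scale:
  assumes e: "e \<in> H2" and y: "y \<in> H2"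
  shows "h2_sqnorm (\<lambda>k. e k - t * y k)
    = h2_sqnorm e - 2 * Re (cnj t * h2_inner e y) + (cmod t)\<^sup>2 * h2_sqnorm y"
proof -
  have ty: "(\<lambda>k. t * y k) \<in> H2" using H2_scale[OF y] .
  have "h2_inner (\<lambda>k. e k - t * y k) (\<lambda>k. e k - t * y k)
      = h2_inner e e - h2_inner e (\<lambda>k. t * y k)
        - (h2_inner (\<lambda>k. t * y k) e - h2_inner (\<lambda>k. t * y k) (\<lambda>k. t * y k))"
    by (simp only: h2_inner_diff_left h2_inner_diff_right H2_diff e ty)
  also have "\<dots> = h2_inner e e - cnj t * h2_inner e y
      - (t * cnj (h2_inner e y) - t * cnj t * h2_inner y y)"
    by (simp add: h2_inner_scale_left h2_inner_scale_right h2_inner_commute[of y e])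
  finally have "of_real (h2_sqnorm (\<lambda>k. e k - t * y k)) = of_real (h2_sqnorm e)
      - cnj t * h2_inner e y - (t * cnj (h2_inner e y) - t * cnj t * of_real (h2_sqnorm y))"
    by (simp add: h2_inner_self H2_diff e y ty)
  from arg_cong[where f=Re, OF this] show ?thesis
    by (simp add: complex_mult_cnj cmod_power2 algebra_simps)
qed

lemma h2_Cauchy_Schwarz:
  assumes f: "f \<in> H2" and g: "g \<in> H2"
  shows "cmod (h2_inner f g) \<le> h2_norm f * h2_norm g"
proof (cases "g = (\<lambda>_. 0)")
  case False
  then have pos: "h2_sqnorm g > 0"
    using h2_sqnorm_eq_0_iff[OF g] h2_sqnorm_nonneg[of g] by linarith
  define a where "a = h2_inner f g"
  define t where "t = a / of_real (h2_sqnorm g)"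
  have "cnj t * a = a * cnj a / of_real (h2_sqnorm g)"
    unfolding t_def by (simp add: mult.commute)
  also have "a * cnj a = of_real ((cmod a)\<^sup>2)"
    by (rule complex_norm_square[symmetric])
  finally have "cnj t * a = of_real ((cmod a)\<^sup>2 / h2_sqnorm g)"
    by simp
  moreover have "(cmod t)\<^sup>2 * h2_sqnorm g = (cmod a)\<^sup>2 / h2_sqnorm g"
    unfolding t_def using pos by (simp add: norm_divide power_divide power2_eq_square)
  moreover have "0 \<le> h2_sqnorm (\<lambda>k. f k - t * g k)" by (rule h2_sqnorm_nonneg)
  ultimately have "(cmod a)\<^sup>2 / h2_sqnorm g \<le> h2_sqnorm f"
    unfolding h2_sqnorm_diff_scale[OF f g] a_def by simp
  then have "(cmod a)\<^sup>2 \<le> h2_sqnorm f * h2_sqnorm g" using pos by (simp add: divide_le_eq)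
  then have "cmod a \<le> sqrt (h2_sqnorm f * h2_sqnorm g)" by (rule real_le_rsqrt)
  then show ?thesis unfolding a_def h2_norm_eq_sqrt_sqnorm by (simp add: real_sqrt_mult)
qed (simp add: h2_norm_nonneg)

lemma h2_norm_triangle:
  assumes f: "f \<in> H2" and g: "g \<in> H2"
  shows "h2_norm (\<lambda>k. f k + g k) \<le> h2_norm f + h2_norm g"
proof -
  have "(h2_norm (\<lambda>k. f k + g k))\<^sup>2 = h2_sqnorm f + 2 * Re (h2_inner f g) + h2_sqnorm g"
    using h2_sqnorm_diff_scale[OF f g, of "- 1"] by (simp add: h2_sqnorm_eq_norm_sq)
  also have "\<dots> \<le> (h2_norm f + h2_norm g)\<^sup>2"
    using h2_Cauchy_Schwarz[OF f g] complex_Re_le_cmod[of "h2_inner f g"]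
    by (simp add: h2_sqnorm_eq_norm_sq power2_sum)
  finally show ?thesis
    using h2_norm_nonneg[of f] h2_norm_nonneg[of g] by (meson add_nonneg_nonneg power2_le_imp_le)
qed

lemma h2_norm_scale: "h2_norm (\<lambda>k. c * f k) = cmod c * h2_norm f"
proof -
  have "h2_sqnorm (\<lambda>k. c * f k) = (cmod c)\<^sup>2 * h2_sqnorm f"
    unfolding h2_sqnorm_def by (simp add: norm_mult power_mult_distrib infsum_cmult_right')
  then show ?thesis by (simp add: h2_norm_eq_sqrt_sqnorm real_sqrt_mult)
qed

lemma h2_norm_diff_triangle:
  assumes "f \<in> H2" "g \<in> H2" "h \<in> H2"
  shows "h2_norm (\<lambda>k. f k - h k) \<le> h2_norm (\<lambda>k. f k - g k) + h2_norm (\<lambda>k. g k - h k)"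
  using h2_norm_triangle[OF H2_diff[OF assms(1,2)] H2_diff[OF assms(2,3)]] by simp

lemma H2_sum:
  assumes "finite S" "\<And>s. s \<in> S \<Longrightarrow> F s \<in> H2"
  shows "(\<lambda>k. \<Sum>s\<in>S. F s k) \<in> H2 \<and> h2_norm (\<lambda>k. \<Sum>s\<in>S. F s k) \<le> (\<Sum>s\<in>S. h2_norm (F s))"
  using assms
proof (induction S rule: finite_induct)
  case empty
  then show ?case by (simp add: H2_zero h2_norm_def)
next
  case (insert x S)
  then have "F x \<in> H2" "(\<lambda>k. \<Sum>s\<in>S. F s k) \<in> H2"
    "h2_norm (\<lambda>k. \<Sum>s\<in>S. F s k) \<le> (\<Sum>s\<in>S. h2_norm (F s))" by auto
  with insert show ?case using H2_add h2_norm_triangle by fastforce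
qed

lemma h2_inner_sum_right:
  assumes "finite J" "\<And>j. j \<in> J \<Longrightarrow> g j \<in> H2" "x \<in> H2"
  shows "h2_inner x (\<lambda>k. \<Sum>j\<in>J. c j * g j k) = (\<Sum>j\<in>J. cnj (c j) * h2_inner x (g j))"
  using assms
proof (induction J rule: finite_induct)
  case (insert a J)
  have "(\<lambda>k. c a * g a k) \<in> H2" "(\<lambda>k. \<Sum>j\<in>J. c j * g j k) \<in> H2"
    using insert H2_scale H2_sum[of J "\<lambda>j k. c j * g j k"] by auto
  then show ?case
    using insert by (simp add: h2_inner_add_right h2_inner_scale_right)
qed simp

lemma h2_inner_tendsto_left:
  assumes "\<And>n. x n \<in> H2" "x0 \<in> H2" "y \<in> H2"
    and lim: "(\<lambda>n. h2_norm (\<lambda>k. x n k - x0 k)) \<longlonglongrightarrow> 0"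
  shows "(\<lambda>n. h2_inner (x n) y) \<longlonglongrightarrow> h2_inner x0 y"
proof -
  have "\<forall>n. norm (h2_inner (x n) y - h2_inner x0 y) \<le> h2_norm (\<lambda>k. x n k - x0 k) * h2_norm y"
    using h2_Cauchy_Schwarz[OF H2_diff[OF assms(1,2)] assms(3)] h2_inner_diff_left[OF assms(1-3)]
    by simp
  from Lim_null_comparison[OF always_eventually[OF this] tendsto_mult_left_zero[OF lim]]
  have "(\<lambda>n. h2_inner (x n) y - h2_inner x0 y) \<longlonglongrightarrow> 0" .
  then show ?thesis by (simp add: LIM_zero_iff)
qed

lemma h2_inner_tendsto_right:
  assumes "\<And>n. x n \<in> H2" "x0 \<in> H2" "y \<in> H2"
    and "(\<lambda>n. h2_norm (\<lambda>k. x n k - x0 k)) \<longlonglongrightarrow> 0"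
  shows "(\<lambda>n. h2_inner y (x n)) \<longlonglongrightarrow> h2_inner y x0"
  using tendsto_cnj[OF h2_inner_tendsto_left[OF assms]] by (simp add: h2_inner_commute[of y])

lemma h2_coeff_le_norm: "f \<in> H2 \<Longrightarrow> cmod (f k) \<le> h2_norm f"
proof -
  assume "f \<in> H2"
  then have "(\<Sum>k\<in>{k}. (cmod (f k))\<^sup>2) \<le> h2_sqnorm f"
    unfolding h2_sqnorm_def by (intro finite_sum_le_infsum) (auto simp: H2_summable)
  then show ?thesis unfolding h2_norm_eq_sqrt_sqnorm by (simp add: real_le_rsqrt)
qed

section \<open>Completeness and orthogonal projection\<close>

lemma h2_Cauchy_tail_bound:
  assumes xin: "\<And>n. x n \<in> H2"
    and N: "\<forall>m\<ge>N. \<forall>n\<ge>N. h2_norm (\<lambda>k. x m k - x n k) < e"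
    and lim: "\<And>k. (\<lambda>n. x n k) \<longlonglongrightarrow> f k"
    and n: "n \<ge> N"
  shows "(\<lambda>k. x n k - f k) \<in> H2" "h2_sqnorm (\<lambda>k. x n k - f k) \<le> e\<^sup>2"
proof -
  have partial: "(\<Sum>k\<in>F. (cmod (x n k - f k))\<^sup>2) \<le> e\<^sup>2" if "finite F" for F
  proof (rule LIMSEQ_le_const2)
    show "(\<lambda>m. \<Sum>k\<in>F. (cmod (x n k - x m k))\<^sup>2) \<longlonglongrightarrow> (\<Sum>k\<in>F. (cmod (x n k - f k))\<^sup>2)"
      by (intro tendsto_intros lim)
    show "\<exists>M. \<forall>m\<ge>M. (\<Sum>k\<in>F. (cmod (x n k - x m k))\<^sup>2) \<le> e\<^sup>2"
    proof (intro exI allI impI)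
      fix m assume "m \<ge> N"
      have "(\<Sum>k\<in>F. (cmod (x n k - x m k))\<^sup>2) \<le> h2_sqnorm (\<lambda>k. x n k - x m k)"
        unfolding h2_sqnorm_def using that
        by (intro finite_sum_le_infsum) (auto simp: H2_summable H2_diff xin)
      also have "\<dots> \<le> e\<^sup>2"
        unfolding h2_sqnorm_eq_norm_sq using N n \<open>m \<ge> N\<close> h2_norm_nonneg
        by (meson less_imp_le power_mono)
      finally show "(\<Sum>k\<in>F. (cmod (x n k - x m k))\<^sup>2) \<le> e\<^sup>2" .
    qed
  qed
  have summable: "(\<lambda>k. (cmod (x n k - f k))\<^sup>2) summable_on UNIV"
    by (rule nonneg_bdd_above_summable_on) (use partial in \<open>auto intro!: bdd_aboveI2\<close>)
  then show "(\<lambda>k. x n k - f k) \<in> H2" by (simp add: H2_def)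
  show "h2_sqnorm (\<lambda>k. x n k - f k) \<le> e\<^sup>2"
    unfolding h2_sqnorm_def by (rule infsum_le_finite_sums[OF summable]) (use partial in auto)
qed

lemma h2_Cauchy_coeff:
  assumes xin: "\<And>n. x n \<in> H2"
    and Cauchy: "\<And>e. e > 0 \<Longrightarrow> \<exists>N. \<forall>m\<ge>N. \<forall>n\<ge>N. h2_norm (\<lambda>k. x m k - x n k) < e"
  shows "Cauchy (\<lambda>n. x n k)"
proof (rule metric_CauchyI)
  fix e :: real assume "e > 0"
  then obtain N where N: "\<forall>m\<ge>N. \<forall>n\<ge>N. h2_norm (\<lambda>k. x m k - x n k) < e"
    using Cauchy by blast
  have "dist (x m k) (x n k) < e" if "m \<ge> N" "n \<ge> N" for m n
    using N that h2_coeff_le_norm[OF H2_diff[OF xin[of m] xin[of n]], of k]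
    by (simp add: dist_norm) (meson le_less_trans)
  then show "\<exists>M. \<forall>m\<ge>M. \<forall>n\<ge>M. dist (x m k) (x n k) < e" by blast
qed

lemma h2_complete:
  assumes xin: "\<And>n. x n \<in> H2"
    and Cauchy: "\<And>e. e > 0 \<Longrightarrow> \<exists>N. \<forall>m\<ge>N. \<forall>n\<ge>N. h2_norm (\<lambda>k. x m k - x n k) < e"
  shows "\<exists>f\<in>H2. (\<lambda>n. h2_norm (\<lambda>k. x n k - f k)) \<longlonglongrightarrow> 0"
proof -
  have "convergent (\<lambda>n. x n k)" for k
    using h2_Cauchy_coeff[OF xin Cauchy] by (simp add: Cauchy_convergent_iff)
  then obtain f where lim: "\<And>k. (\<lambda>n. x n k) \<longlonglongrightarrow> f k"
    unfolding convergent_def by metis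
  obtain N1 where "\<forall>m\<ge>N1. \<forall>n\<ge>N1. h2_norm (\<lambda>k. x m k - x n k) < 1"
    using Cauchy[of 1] by auto
  from h2_Cauchy_tail_bound(1)[OF xin this lim order_refl]
  have "(\<lambda>k. x N1 k - (x N1 k - f k)) \<in> H2"
    using H2_diff xin by blast
  then have f: "f \<in> H2" by simp
  have "(\<lambda>n. h2_norm (\<lambda>k. x n k - f k)) \<longlonglongrightarrow> 0"
  proof (rule LIMSEQ_I)
    fix r :: real assume "r > 0"
    then obtain N where N: "\<forall>m\<ge>N. \<forall>n\<ge>N. h2_norm (\<lambda>k. x m k - x n k) < r / 2"
      using Cauchy[of "r / 2"] by auto
    have "h2_norm (\<lambda>k. x n k - f k) < r" if "n \<ge> N" for n
    proof -
      have "(h2_norm (\<lambda>k. x n k - f k))\<^sup>2 \<le> (r / 2)\<^sup>2"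
        using h2_Cauchy_tail_bound(2)[OF xin N lim that] by (simp add: h2_sqnorm_eq_norm_sq)
      then have "h2_norm (\<lambda>k. x n k - f k) \<le> r / 2"
        using \<open>r > 0\<close> by (simp add: power2_le_iff_abs_le)
      then show ?thesis using \<open>r > 0\<close> by simp
    qed
    then show "\<exists>N. \<forall>n\<ge>N. norm (h2_norm (\<lambda>k. x n k - f k) - 0) < r"
      using h2_norm_nonneg by auto
  qed
  with f show ?thesis by blast
qed

definition h2_subspace :: "h2 set \<Rightarrow> bool" where
  "h2_subspace V \<longleftrightarrow> V \<subseteq> H2 \<and> (\<lambda>_. 0) \<in> V
     \<and> (\<forall>f\<in>V. \<forall>g\<in>V. (\<lambda>k. f k + g k) \<in> V) \<and> (\<forall>c. \<forall>f\<in>V. (\<lambda>k. c * f k) \<in> V)"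

definition h2_closed :: "h2 set \<Rightarrow> bool" where
  "h2_closed V \<longleftrightarrow> (\<forall>x f. (\<forall>n. x n \<in> V) \<and> f \<in> H2 \<and> (\<lambda>n. h2_norm (\<lambda>k. x n k - f k)) \<longlonglongrightarrow> 0
     \<longrightarrow> f \<in> V)"

lemma h2_subspaceD:
  assumes "h2_subspace V"
  shows "V \<subseteq> H2" "(\<lambda>_. 0) \<in> V"
    "\<And>f g. f \<in> V \<Longrightarrow> g \<in> V \<Longrightarrow> (\<lambda>k. f k + g k) \<in> V"
    "\<And>c f. f \<in> V \<Longrightarrow> (\<lambda>k. c * f k) \<in> V"
  using assms unfolding h2_subspace_def by blast+

lemma h2_subspace_diff:
  assumes "h2_subspace V" "f \<in> V" "g \<in> V"
  shows "(\<lambda>k. f k - g k) \<in> V"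
  using h2_subspaceD(3)[OF assms(1,2) h2_subspaceD(4)[OF assms(1,3), of "- 1"]] by simp

lemma h2_closedD:
  "h2_closed V \<Longrightarrow> (\<And>n. x n \<in> V) \<Longrightarrow> f \<in> H2 \<Longrightarrow> (\<lambda>n. h2_norm (\<lambda>k. x n k - f k)) \<longlonglongrightarrow> 0
    \<Longrightarrow> f \<in> V"
  unfolding h2_closed_def by blast

lemma h2_subspace_orthogonal:
  assumes V: "h2_subspace V" and G: "G \<subseteq> H2"
  shows "h2_subspace {x \<in> V. \<forall>g\<in>G. h2_inner x g = 0}"
  unfolding h2_subspace_def
proof (intro conjI ballI allI)
  fix f g assume f: "f \<in> {x \<in> V. \<forall>g\<in>G. h2_inner x g = 0}"
    and g: "g \<in> {x \<in> V. \<forall>g\<in>G. h2_inner x g = 0}"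
  then have "f \<in> H2" "g \<in> H2" using h2_subspaceD(1)[OF V] by auto
  with f g G show "(\<lambda>k. f k + g k) \<in> {x \<in> V. \<forall>g\<in>G. h2_inner x g = 0}"
    by (auto simp: h2_inner_add_left h2_subspaceD(3)[OF V] subset_iff)
qed (use h2_subspaceD[OF V] in \<open>auto simp: h2_inner_scale_left\<close>)

lemma h2_closed_orthogonal:
  assumes V: "h2_closed V" "V \<subseteq> H2" and G: "G \<subseteq> H2"
  shows "h2_closed {x \<in> V. \<forall>g\<in>G. h2_inner x g = 0}"
  unfolding h2_closed_def
proof (intro allI impI)
  fix x f assume a: "(\<forall>n. x n \<in> {x \<in> V. \<forall>g\<in>G. h2_inner x g = 0}) \<and> f \<in> H2
    \<and> (\<lambda>n. h2_norm (\<lambda>k. x n k - f k)) \<longlonglongrightarrow> 0"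
  then have x: "\<And>n. x n \<in> V" by blast
  have "h2_inner f g = 0" if "g \<in> G" for g
  proof -
    have "(\<lambda>n. h2_inner (x n) g) \<longlonglongrightarrow> h2_inner f g"
      using a x V(2) G that by (intro h2_inner_tendsto_left) auto
    moreover have "(\<lambda>n. h2_inner (x n) g) = (\<lambda>n. 0)" using a that by auto
    ultimately show ?thesis using LIMSEQ_unique tendsto_const by metis
  qed
  then show "f \<in> {x \<in> V. \<forall>g\<in>G. h2_inner x g = 0}"
    using h2_closedD[OF V(1), of x f] x a by blast
qed

lemma h2_parallelogram:
  assumes "f \<in> H2" "g \<in> H2"
  shows "h2_sqnorm (\<lambda>k. f k + g k) + h2_sqnorm (\<lambda>k. f k - g k) = 2 * h2_sqnorm f + 2 * h2_sqnorm g"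
  using h2_sqnorm_diff_scale[OF assms, of 1] h2_sqnorm_diff_scale[OF assms, of "- 1"] by simp

text \<open>The parallelogram law for \<open>x - v\<close> and \<open>x - w\<close>, using that the midpoint of \<open>v\<close> and \<open>w\<close>
  lies in \<open>V\<close>.\<close>
lemma h2_subspace_near_points_close:
  assumes V: "h2_subspace V" and x: "x \<in> H2" and d: "\<forall>u\<in>V. d \<le> h2_sqnorm (\<lambda>k. x k - u k)"
    and v: "v \<in> V" and w: "w \<in> V"
  shows "h2_sqnorm (\<lambda>k. v k - w k)
    \<le> 2 * h2_sqnorm (\<lambda>k. x k - v k) + 2 * h2_sqnorm (\<lambda>k. x k - w k) - 4 * d"
proof -
  have xv: "(\<lambda>k. x k - v k) \<in> H2" and xw: "(\<lambda>k. x k - w k) \<in> H2"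
    using H2_diff x v w h2_subspaceD(1)[OF V] by auto
  define mid where "mid = (\<lambda>k. (1 / 2) * (v k + w k))"
  have "mid \<in> V" unfolding mid_def using h2_subspaceD(3,4)[OF V] v w by blast
  then have "4 * d \<le> 4 * h2_sqnorm (\<lambda>k. x k - mid k)" using d by simp
  also have "4 * h2_sqnorm (\<lambda>k. x k - mid k) = h2_sqnorm (\<lambda>k. 2 * (x k - mid k))"
    using h2_norm_scale[of 2 "\<lambda>k. x k - mid k"] by (simp add: h2_sqnorm_eq_norm_sq power_mult_distrib)
  also have "(\<lambda>k. 2 * (x k - mid k)) = (\<lambda>k. (x k - v k) + (x k - w k))"
    unfolding mid_def by (auto simp: algebra_simps)
  finally show ?thesis
    using h2_parallelogram[OF xw xv] by (simp add: algebra_simps)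
qed

lemma h2_minimizing_sequence_converges:
  assumes V: "h2_subspace V" and x: "x \<in> H2" and d_le: "\<forall>u\<in>V. d \<le> h2_sqnorm (\<lambda>k. x k - u k)"
    and vV: "\<And>n. v n \<in> V"
    and v_lt: "\<And>n. h2_sqnorm (\<lambda>k. x k - v n k) < d + inverse (real (Suc n))"
  shows "\<exists>q\<in>H2. (\<lambda>n. h2_norm (\<lambda>k. v n k - q k)) \<longlonglongrightarrow> 0"
proof (rule h2_complete)
  show "v n \<in> H2" for n using vV h2_subspaceD(1)[OF V] by blast
  fix e :: real assume "e > 0"
  then obtain N where N: "inverse (real (Suc N)) < e\<^sup>2 / 4"
    using reals_Archimedean[of "e\<^sup>2 / 4"] by auto
  have "h2_norm (\<lambda>k. v m k - v n k) < e" if "m \<ge> N" "n \<ge> N" for m n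
  proof -
    have "inverse (real (Suc m)) \<le> inverse (real (Suc N))" "inverse (real (Suc n)) \<le> inverse (real (Suc N))"
      using that by (auto simp: field_simps)
    then have "h2_sqnorm (\<lambda>k. x k - v m k) < d + inverse (real (Suc N))"
      "h2_sqnorm (\<lambda>k. x k - v n k) < d + inverse (real (Suc N))"
      using v_lt[of m] v_lt[of n] by linarith+
    moreover have "h2_sqnorm (\<lambda>k. v m k - v n k)
        \<le> 2 * h2_sqnorm (\<lambda>k. x k - v m k) + 2 * h2_sqnorm (\<lambda>k. x k - v n k) - 4 * d"
      by (rule h2_subspace_near_points_close[OF V x d_le vV vV])
    ultimately have "h2_sqnorm (\<lambda>k. v m k - v n k) < e\<^sup>2"
      using N by linarith
    then have "(h2_norm (\<lambda>k. v m k - v n k))\<^sup>2 < e\<^sup>2" by (simp add: h2_sqnorm_eq_norm_sq)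
    then show ?thesis using \<open>e > 0\<close> h2_norm_nonneg
      by (meson abs_le_square_iff abs_of_nonneg less_le_not_le power_less_imp_less_base)
  qed
  then show "\<exists>N. \<forall>m\<ge>N. \<forall>n\<ge>N. h2_norm (\<lambda>k. v m k - v n k) < e" by blast
qed

lemma h2_closed_subspace_nearest_point:
  assumes V: "h2_subspace V" "h2_closed V" and x: "x \<in> H2"
  shows "\<exists>q\<in>V. \<forall>v\<in>V. h2_sqnorm (\<lambda>k. x k - q k) \<le> h2_sqnorm (\<lambda>k. x k - v k)"
proof -
  have VH: "V \<subseteq> H2" using h2_subspaceD(1)[OF V(1)] .
  define D where "D = (\<lambda>v. h2_sqnorm (\<lambda>k. x k - v k)) ` V"
  define d where "d = Inf D"
  have "D \<noteq> {}" unfolding D_def using h2_subspaceD(2)[OF V(1)] by blast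
  have bdd: "bdd_below D" unfolding D_def by (auto intro!: bdd_belowI[of _ 0] h2_sqnorm_nonneg)
  have d_le: "\<forall>v\<in>V. d \<le> h2_sqnorm (\<lambda>k. x k - v k)"
    unfolding d_def D_def using bdd by (auto intro: cInf_lower simp: D_def)
  have "\<exists>v\<in>V. h2_sqnorm (\<lambda>k. x k - v k) < d + inverse (real (Suc n))" for n
    using cInf_lessD[OF \<open>D \<noteq> {}\<close>, of "d + inverse (real (Suc n))"] unfolding d_def D_def by auto
  then obtain v where vV: "\<And>n. v n \<in> V"
    and v_lt: "\<And>n. h2_sqnorm (\<lambda>k. x k - v n k) < d + inverse (real (Suc n))"
    by metis
  have vH: "v n \<in> H2" for n using vV VH by blast
  have "\<exists>q\<in>H2. (\<lambda>n. h2_norm (\<lambda>k. v n k - q k)) \<longlonglongrightarrow> 0"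
    by (rule h2_minimizing_sequence_converges[OF V(1) x d_le vV v_lt])
  then obtain q where q: "q \<in> H2" and v_lim: "(\<lambda>n. h2_norm (\<lambda>k. v n k - q k)) \<longlonglongrightarrow> 0"
    by blast
  have "q \<in> V" using h2_closedD[OF V(2) vV q v_lim] .
  have "(\<lambda>n. h2_sqnorm (\<lambda>k. x k - v n k)) \<longlonglongrightarrow> d"
  proof (rule tendsto_sandwich[OF _ _ tendsto_const])
    show "\<forall>\<^sub>F n in sequentially. d \<le> h2_sqnorm (\<lambda>k. x k - v n k)" using d_le vV by simp
    show "\<forall>\<^sub>F n in sequentially. h2_sqnorm (\<lambda>k. x k - v n k) \<le> d + inverse (real (Suc n))"
      by (intro always_eventually allI less_imp_le v_lt)
    show "(\<lambda>n. d + inverse (real (Suc n))) \<longlonglongrightarrow> d"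
      using tendsto_add[OF tendsto_const LIMSEQ_inverse_real_of_nat] by simp
  qed
  then have "(\<lambda>n. h2_norm (\<lambda>k. x k - v n k)) \<longlonglongrightarrow> sqrt d"
    unfolding h2_norm_eq_sqrt_sqnorm by (rule tendsto_real_sqrt)
  then have "(\<lambda>n. h2_norm (\<lambda>k. x k - v n k) + h2_norm (\<lambda>k. v n k - q k)) \<longlonglongrightarrow> sqrt d + 0"
    by (rule tendsto_add[OF _ v_lim])
  then have "h2_norm (\<lambda>k. x k - q k) \<le> sqrt d + 0"
    by (rule LIMSEQ_le_const) (use h2_norm_diff_triangle[OF x vH q] in blast)
  then have "h2_sqnorm (\<lambda>k. x k - q k) \<le> d"
    unfolding h2_norm_eq_sqrt_sqnorm using h2_sqnorm_nonneg real_sqrt_le_iff by simp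
  then have "\<forall>v\<in>V. h2_sqnorm (\<lambda>k. x k - q k) \<le> h2_sqnorm (\<lambda>k. x k - v k)"
    using d_le by (blast intro: order_trans)
  with \<open>q \<in> V\<close> show ?thesis by blast
qed

lemma h2_nearest_point_orthogonal:
  assumes V: "h2_subspace V" and x: "x \<in> H2" and q: "q \<in> V"
    and nearest: "\<forall>v\<in>V. h2_sqnorm (\<lambda>k. x k - q k) \<le> h2_sqnorm (\<lambda>k. x k - v k)"
    and y: "y \<in> V"
  shows "h2_inner (\<lambda>k. x k - q k) y = 0"
proof (rule ccontr)
  define a where "a = h2_inner (\<lambda>k. x k - q k) y"
  assume "h2_inner (\<lambda>k. x k - q k) y \<noteq> 0"
  then have a_pos: "(cmod a)\<^sup>2 > 0" unfolding a_def by simp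
  have e: "(\<lambda>k. x k - q k) \<in> H2" and yH: "y \<in> H2"
    using H2_diff x q y h2_subspaceD(1)[OF V] by auto
  define s :: real where "s = 1 / (h2_sqnorm y + 1)"
  have s_pos: "s > 0" unfolding s_def using h2_sqnorm_nonneg[of y] by simp
  have s_small: "s * h2_sqnorm y < 1" unfolding s_def using h2_sqnorm_nonneg[of y] by (simp add: field_simps)
  define t where "t = of_real s * a"
  have "(\<lambda>k. q k + t * y k) \<in> V" using h2_subspaceD(3,4)[OF V] q y by blast
  moreover have "(\<lambda>k. x k - (q k + t * y k)) = (\<lambda>k. (x k - q k) - t * y k)"
    by (simp add: algebra_simps)
  ultimately have "h2_sqnorm (\<lambda>k. x k - q k) \<le> h2_sqnorm (\<lambda>k. (x k - q k) - t * y k)"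
    using nearest by metis
  also have "\<dots> = h2_sqnorm (\<lambda>k. x k - q k) - 2 * Re (cnj t * a) + (cmod t)\<^sup>2 * h2_sqnorm y"
    unfolding a_def by (rule h2_sqnorm_diff_scale[OF e yH])
  also have "cnj t * a = of_real (s * (cmod a)\<^sup>2)"
    unfolding t_def by (simp add: complex_norm_square[symmetric] mult.commute mult.left_commute)
  also have "(cmod t)\<^sup>2 = s\<^sup>2 * (cmod a)\<^sup>2"
    unfolding t_def using s_pos by (simp add: norm_mult power_mult_distrib)
  finally have "2 * (s * (cmod a)\<^sup>2) \<le> s\<^sup>2 * (cmod a)\<^sup>2 * h2_sqnorm y"
    by simp
  then have "(2 * s) * (cmod a)\<^sup>2 \<le> (s * (s * h2_sqnorm y)) * (cmod a)\<^sup>2"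
    by (simp add: power2_eq_square mult_ac)
  then have "2 * s \<le> s * (s * h2_sqnorm y)" using a_pos by (rule mult_right_le_imp_le)
  then have "2 \<le> s * h2_sqnorm y" using s_pos by simp
  then show False using s_small by simp
qed

lemma proj_eqI:
  assumes V: "h2_subspace V" and x: "x \<in> H2"
    and q: "q \<in> V" "\<forall>y\<in>V. h2_inner (\<lambda>k. x k - q k) y = 0"
  shows "proj V x = q"
  unfolding proj_def
proof (rule the_equality)
  fix q' assume q': "q' \<in> V \<and> (\<forall>y\<in>V. h2_inner (\<lambda>k. x k - q' k) y = 0)"
  define D where "D = (\<lambda>k. q k - q' k)"
  have D: "D \<in> V" "D \<in> H2" unfolding D_def using h2_subspace_diff[OF V] h2_subspaceD(1)[OF V] q q'
    by auto
  have H: "q \<in> H2" "q' \<in> H2" using q q' h2_subspaceD(1)[OF V] by auto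
  have "D = (\<lambda>k. (x k - q' k) - (x k - q k))" unfolding D_def by simp
  then have "h2_inner D D = h2_inner (\<lambda>k. x k - q' k) D - h2_inner (\<lambda>k. x k - q k) D"
    using h2_inner_diff_left[OF H2_diff[OF x H(2)] H2_diff[OF x H(1)] D(2)] by simp
  also have "\<dots> = 0" using q q' D by simp
  finally have "D = (\<lambda>_. 0)" using h2_inner_self_eq_0_iff[OF D(2)] by blast
  then show "q' = q" unfolding D_def by (simp add: fun_eq_iff)
qed (use q in blast)

lemma
  assumes "h2_subspace V" "h2_closed V" "x \<in> H2"
  shows proj_in: "proj V x \<in> V"
    and proj_orthogonal: "\<forall>y\<in>V. h2_inner (\<lambda>k. x k - proj V x k) y = 0"
proof -
  obtain q where q: "q \<in> V" "\<forall>v\<in>V. h2_sqnorm (\<lambda>k. x k - q k) \<le> h2_sqnorm (\<lambda>k. x k - v k)"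
    using h2_closed_subspace_nearest_point[OF assms] by blast
  then have orth: "\<forall>y\<in>V. h2_inner (\<lambda>k. x k - q k) y = 0"
    using h2_nearest_point_orthogonal[OF assms(1,3)] by blast
  have "proj V x = q" by (rule proj_eqI[OF assms(1,3) q(1) orth])
  with q(1) orth show "proj V x \<in> V" "\<forall>y\<in>V. h2_inner (\<lambda>k. x k - proj V x k) y = 0"
    by simp_all
qed

section \<open>Finite dimension\<close>

lemma fin_dim_mono: "fin_dim K \<Longrightarrow> A \<subseteq> K \<Longrightarrow> fin_dim A"
  unfolding fin_dim_def by blast

lemma fin_dim_extend:
  assumes A: "fin_dim A" and V: "\<forall>x\<in>V. \<exists>t. (\<lambda>k. x k - t * v k) \<in> A"
  shows "fin_dim V"
proof -
  obtain B where B: "finite B" "\<forall>x\<in>A. \<exists>c. x = (\<lambda>k. \<Sum>b\<in>B. c b * b k)"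
    using A unfolding fin_dim_def by blast
  have "\<exists>c. x = (\<lambda>k. \<Sum>b\<in>insert v B. c b * b k)" if "x \<in> V" for x
  proof -
    from V that obtain t where "(\<lambda>k. x k - t * v k) \<in> A" by blast
    with B(2) obtain c where eq: "(\<lambda>k. x k - t * v k) = (\<lambda>k. \<Sum>b\<in>B. c b * b k)" by blast
    have x: "x k = (\<Sum>b\<in>B. c b * b k) + t * v k" for k
      using fun_cong[OF eq, of k] by (simp add: diff_eq_eq)
    define c' where "c' = c(v := (if v \<in> B then c v else 0) + t)"
    have "(\<Sum>b\<in>insert v B. c' b * b k) = (\<Sum>b\<in>B. c b * b k) + t * v k" for k
    proof (cases "v \<in> B")
      case True
      then show ?thesis using B(1)
        by (simp add: c'_def sum.remove[of B v] insert_absorb distrib_right algebra_simps)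
    next
      case False
      then have "(\<Sum>b\<in>B. c' b * b k) = (\<Sum>b\<in>B. c b * b k)"
        unfolding c'_def by (intro sum.cong) auto
      then show ?thesis using B(1) False by (simp add: c'_def add.commute)
    qed
    then show ?thesis using x by (intro exI[of _ c']) auto
  qed
  then show ?thesis using B(1) unfolding fin_dim_def by (intro exI[of _ "insert v B"]) auto
qed

lemma fin_dim_orthogonal_hyperplane:
  assumes V: "h2_subspace V" and g: "g \<in> H2" and fd: "fin_dim {x \<in> V. h2_inner x g = 0}"
  shows "fin_dim V"
proof (cases "\<exists>v\<in>V. h2_inner v g \<noteq> 0")
  case True
  then obtain v where v: "v \<in> V" "h2_inner v g \<noteq> 0" by blast
  have "\<exists>t. (\<lambda>k. x k - t * v k) \<in> {x \<in> V. h2_inner x g = 0}" if x: "x \<in> V" for x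
  proof
    define t where "t = h2_inner x g / h2_inner v g"
    have H: "x \<in> H2" "v \<in> H2" using x v h2_subspaceD(1)[OF V] by auto
    have "h2_inner (\<lambda>k. x k - t * v k) g = h2_inner x g - t * h2_inner v g"
      using h2_inner_diff_left[OF H(1) H2_scale[OF H(2)] g] by (simp add: h2_inner_scale_left)
    also have "\<dots> = 0" unfolding t_def using v(2) by simp
    finally show "(\<lambda>k. x k - t * v k) \<in> {x \<in> V. h2_inner x g = 0}"
      using h2_subspace_diff[OF V x h2_subspaceD(4)[OF V v(1)]] by blast
  qed
  then show ?thesis using fin_dim_extend[OF fd] by blast
next
  case False
  then show ?thesis using fin_dim_mono[OF fd] by blast
qed

lemma fin_dim_if_orthogonal_trivial:
  assumes "finite G" "G \<subseteq> H2" "h2_subspace V"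
    and "\<forall>x\<in>V. (\<forall>g\<in>G. h2_inner x g = 0) \<longrightarrow> x = (\<lambda>_. 0)"
  shows "fin_dim V"
  using assms
proof (induction G arbitrary: V rule: finite_induct)
  case empty
  then show ?case unfolding fin_dim_def by auto
next
  case (insert g G)
  have "h2_subspace {x \<in> V. h2_inner x g = 0}"
    using h2_subspace_orthogonal[OF insert.prems(2), of "{g}"] insert.prems(1) by simp
  then have "fin_dim {x \<in> V. h2_inner x g = 0}"
    using insert.IH insert.prems by simp
  then show ?case using fin_dim_orthogonal_hyperplane insert.prems by blast
qed

section \<open>Multiplication by polynomials\<close>

text \<open>A coefficient array is read as a power series in \<open>z\<close> whose coefficients are power
  series in \<open>w\<close>; \<open>h2_mult\<close> is then the product of formal power series.\<close>

definition h2_to_fps :: "h2 \<Rightarrow> complex fps fps" where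
  "h2_to_fps a = Abs_fps (\<lambda>m. Abs_fps (\<lambda>n. a (m, n)))"

definition fps_to_h2 :: "complex fps fps \<Rightarrow> h2" where
  "fps_to_h2 F = (\<lambda>(m, n). fps_nth (fps_nth F m) n)"

lemma fps_to_h2_to_fps [simp]: "fps_to_h2 (h2_to_fps a) = a"
  by (auto simp: fps_to_h2_def h2_to_fps_def)

lemma h2_to_fps_inject: "h2_to_fps a = h2_to_fps b \<Longrightarrow> a = b"
  by (metis fps_to_h2_to_fps)

lemma h2_mult_eq_fps: "h2_mult a b = fps_to_h2 (h2_to_fps a * h2_to_fps b)"
  by (auto simp: h2_mult_def fps_to_h2_def h2_to_fps_def fps_mult_nth fps_sum_nth atLeast0AtMost)

lemma h2_to_fps_mult: "h2_to_fps (h2_mult a b) = h2_to_fps a * h2_to_fps b"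
  by (simp add: h2_mult_eq_fps fps_eq_iff fps_to_h2_def h2_to_fps_def)

lemma h2_to_fps_add: "h2_to_fps (\<lambda>k. f k + g k) = h2_to_fps f + h2_to_fps g"
  by (simp add: fps_eq_iff h2_to_fps_def)

lemma h2_to_fps_diff: "h2_to_fps (\<lambda>k. f k - g k) = h2_to_fps f - h2_to_fps g"
  by (simp add: fps_eq_iff h2_to_fps_def)

lemma h2_to_fps_zpoly: "h2_to_fps zpoly = fps_X"
  by (auto simp: fps_eq_iff zpoly_def fps_X_def h2_to_fps_def)

lemma h2_mult_commute: "h2_mult a b = h2_mult b a"
  by (simp add: h2_mult_eq_fps mult.commute)

lemma h2_mult_assoc: "h2_mult a (h2_mult b c) = h2_mult (h2_mult a b) c"
  by (simp add: h2_mult_eq_fps h2_to_fps_mult[unfolded h2_mult_eq_fps] mult.assoc)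

lemma h2_mult_add_left: "h2_mult (\<lambda>k. f k + g k) q = (\<lambda>k. h2_mult f q k + h2_mult g q k)"
  by (rule ext) (simp add: h2_mult_def sum.distrib distrib_right split: prod.split)

lemma h2_mult_add_right: "h2_mult q (\<lambda>k. f k + g k) = (\<lambda>k. h2_mult q f k + h2_mult q g k)"
  by (rule ext) (simp add: h2_mult_def sum.distrib distrib_left split: prod.split)

lemma h2_mult_diff_right: "h2_mult q (\<lambda>k. f k - g k) = (\<lambda>k. h2_mult q f k - h2_mult q g k)"
  by (rule ext) (simp add: h2_mult_def sum_subtractf right_diff_distrib split: prod.split)

lemma h2_mult_scale_left: "h2_mult (\<lambda>k. c * w k) f = (\<lambda>k. c * h2_mult w f k)"
  by (rule ext) (simp add: h2_mult_def sum_distrib_left mult_ac split: prod.split)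

lemma h2_mult_scale_right: "h2_mult q (\<lambda>k. c * f k) = (\<lambda>k. c * h2_mult q f k)"
  by (rule ext) (simp add: h2_mult_def sum_distrib_left mult_ac split: prod.split)

lemma h2_mult_zero_right: "h2_mult q (\<lambda>_. 0) = (\<lambda>_. 0)"
  by (rule ext) (simp add: h2_mult_def split: prod.split)

lemma h2_mult_sum_left:
  "finite J \<Longrightarrow> h2_mult (\<lambda>k. \<Sum>j\<in>J. c j * w j k) f = (\<lambda>k. \<Sum>j\<in>J. c j * h2_mult (w j) f k)"
  by (induction J rule: finite_induct)
    (simp_all add: h2_mult_zero_right[of f, unfolded h2_mult_commute[of f]] h2_mult_add_left
      h2_mult_scale_left)

definition h2_one :: h2 where
  "h2_one = (\<lambda>k. if k = (0, 0) then 1 else 0)"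

lemma h2_mult_one: "h2_mult h2_one f = f"
proof -
  have "h2_to_fps h2_one = 1" by (simp add: fps_eq_iff h2_one_def h2_to_fps_def)
  then show ?thesis by (simp add: h2_mult_eq_fps)
qed

lemma poly2_H2: "q \<in> poly2 \<Longrightarrow> q \<in> H2"
  unfolding H2_def poly2_def by (simp add: finite_nonzero_values_imp_summable_on)

lemma h2_one_poly2: "h2_one \<in> poly2"
  by (simp add: poly2_def h2_one_def)

lemma zpoly_poly2: "zpoly \<in> poly2"
  by (simp add: poly2_def zpoly_def)

lemma poly2_mult:
  assumes "a \<in> poly2" "b \<in> poly2"
  shows "h2_mult a b \<in> poly2"
proof -
  let ?A = "{k. a k \<noteq> 0}" and ?B = "{k. b k \<noteq> 0}"
  have "{k. h2_mult a b k \<noteq> 0} \<subseteq> (\<lambda>(s, t). (fst s + fst t, snd s + snd t)) ` (?A \<times> ?B)"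
  proof
    fix k assume "k \<in> {k. h2_mult a b k \<noteq> 0}"
    then obtain m n where k: "k = (m, n)" and "h2_mult a b (m, n) \<noteq> 0" by (cases k) auto
    then obtain i j where "i \<le> m" "j \<le> n" "a (i, j) * b (m - i, n - j) \<noteq> 0"
      unfolding h2_mult_def by (auto elim!: sum.not_neutral_contains_not_neutral)
    then show "k \<in> (\<lambda>(s, t). (fst s + fst t, snd s + snd t)) ` (?A \<times> ?B)"
      using k by (intro image_eqI[where x="((i, j), (m - i, n - j))"]) auto
  qed
  moreover have "finite ((\<lambda>(s, t). (fst s + fst t, snd s + snd t)) ` (?A \<times> ?B))"
    using assms by (simp add: poly2_def)
  ultimately show ?thesis unfolding poly2_def by (auto intro: finite_subset)
qed

text \<open>Multiplication by the monomial \<open>z^(fst s) w^(snd s)\<close>.\<close>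
definition h2_shift :: "nat \<times> nat \<Rightarrow> h2 \<Rightarrow> h2" where
  "h2_shift s f = (\<lambda>(m, n). if fst s \<le> m \<and> snd s \<le> n then f (m - fst s, n - snd s) else 0)"

lemma h2_shift_has_sum:
  assumes "f \<in> H2"
  shows "((\<lambda>k. (cmod (h2_shift s f k))\<^sup>2) has_sum h2_sqnorm f) UNIV"
proof -
  define g where "g = (\<lambda>(m::nat, n::nat). (m + fst s, n + snd s))"
  have inj: "inj_on g UNIV" unfolding g_def by (auto simp: inj_on_def)
  have "((\<lambda>k. (cmod (f k))\<^sup>2) has_sum h2_sqnorm f) UNIV"
    unfolding h2_sqnorm_def using H2_summable[OF assms] by simp
  moreover have "(\<lambda>k. (cmod (f k))\<^sup>2) = (\<lambda>k. (cmod (h2_shift s f k))\<^sup>2) \<circ> g"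
    by (auto simp: g_def h2_shift_def)
  ultimately have "((\<lambda>k. (cmod (h2_shift s f k))\<^sup>2) has_sum h2_sqnorm f) (range g)"
    using has_sum_reindex[OF inj, of "\<lambda>k. (cmod (h2_shift s f k))\<^sup>2"] by simp
  moreover have "x \<in> range g" if "h2_shift s f x \<noteq> 0" for x
  proof -
    obtain m n where x: "x = (m, n)" by (cases x)
    with that have "fst s \<le> m" "snd s \<le> n" by (auto simp: h2_shift_def split: if_splits)
    then show ?thesis unfolding x g_def by (intro range_eqI[where x="(m - fst s, n - snd s)"]) auto
  qed
  ultimately show ?thesis
    by (subst has_sum_cong_neutral[where T="range g" and g="\<lambda>k. (cmod (h2_shift s f k))\<^sup>2"]) auto
qed

lemma h2_shift_H2: "f \<in> H2 \<Longrightarrow> h2_shift s f \<in> H2"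
  using h2_shift_has_sum unfolding H2_def summable_on_def by blast

lemma h2_norm_shift: "f \<in> H2 \<Longrightarrow> h2_norm (h2_shift s f) = h2_norm f"
  using h2_shift_has_sum[of f s] by (simp add: h2_norm_eq_sqrt_sqnorm h2_sqnorm_def infsumI)

lemma h2_mult_eq_sum_shifts:
  assumes "q \<in> poly2"
  shows "h2_mult q f = (\<lambda>k. \<Sum>s\<in>{k. q k \<noteq> 0}. q s * h2_shift s f k)"
proof (rule ext, clarify)
  fix m n
  let ?S = "{k. q k \<noteq> 0}"
  have "h2_mult q f (m, n) = (\<Sum>s\<in>{..m} \<times> {..n}. q s * f (m - fst s, n - snd s))"
    by (simp add: h2_mult_def sum.cartesian_product) (auto intro!: sum.cong)
  also have "\<dots> = (\<Sum>s\<in>{..m} \<times> {..n}. q s * h2_shift s f (m, n))"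
    by (rule sum.cong) (auto simp: h2_shift_def)
  also have "\<dots> = (\<Sum>s\<in>({..m} \<times> {..n}) \<inter> ?S. q s * h2_shift s f (m, n))"
    by (intro sum.mono_neutral_right) (auto simp: h2_shift_def)
  also have "\<dots> = (\<Sum>s\<in>?S. q s * h2_shift s f (m, n))"
    using assms unfolding poly2_def
    by (intro sum.mono_neutral_left) (auto simp: h2_shift_def)
  finally show "h2_mult q f (m, n) = (\<Sum>s\<in>?S. q s * h2_shift s f (m, n))" .
qed

definition poly2_abs_coeff_sum :: "h2 \<Rightarrow> real" where
  "poly2_abs_coeff_sum q = (\<Sum>s\<in>{k. q k \<noteq> 0}. cmod (q s))"

lemma
  assumes "q \<in> poly2" "f \<in> H2"
  shows poly2_mult_H2: "h2_mult q f \<in> H2"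
    and h2_norm_poly2_mult_le: "h2_norm (h2_mult q f) \<le> poly2_abs_coeff_sum q * h2_norm f"
proof -
  have "finite {k. q k \<noteq> 0}" using assms(1) by (simp add: poly2_def)
  from H2_sum[OF this, of "\<lambda>s k. q s * h2_shift s f k"]
  have "h2_mult q f \<in> H2 \<and> h2_norm (h2_mult q f) \<le> (\<Sum>s\<in>{k. q k \<noteq> 0}. h2_norm (\<lambda>k. q s * h2_shift s f k))"
    unfolding h2_mult_eq_sum_shifts[OF assms(1)] using H2_scale h2_shift_H2 assms(2) by blast
  then show "h2_mult q f \<in> H2" "h2_norm (h2_mult q f) \<le> poly2_abs_coeff_sum q * h2_norm f"
    by (simp_all add: poly2_abs_coeff_sum_def h2_norm_scale h2_norm_shift assms(2) sum_distrib_right)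
qed

lemma h2_mult_tendsto:
  assumes q: "q \<in> poly2" and x: "\<And>n. x n \<in> H2" and f: "f \<in> H2"
    and lim: "(\<lambda>n. h2_norm (\<lambda>k. x n k - f k)) \<longlonglongrightarrow> 0"
  shows "(\<lambda>n. h2_norm (\<lambda>k. h2_mult q (x n) k - h2_mult q f k)) \<longlonglongrightarrow> 0"
proof -
  have "\<forall>n. norm (h2_norm (\<lambda>k. h2_mult q (x n) k - h2_mult q f k))
      \<le> h2_norm (\<lambda>k. x n k - f k) * poly2_abs_coeff_sum q"
    using h2_norm_poly2_mult_le[OF q H2_diff[OF x f]]
    by (simp add: h2_mult_diff_right h2_norm_nonneg mult.commute)
  from Lim_null_comparison[OF always_eventually[OF this] tendsto_mult_left_zero[OF lim]]
  show ?thesis .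
qed

definition h2_trunc :: "nat \<Rightarrow> h2 \<Rightarrow> h2" where
  "h2_trunc N g = (\<lambda>k. if k \<in> {..N} \<times> {..N} then g k else 0)"

lemma h2_trunc_poly2: "h2_trunc N g \<in> poly2"
  unfolding poly2_def h2_trunc_def mem_Collect_eq
  by (rule finite_subset[of _ "{..N} \<times> {..N}"]) auto

lemma filterlim_squares_finite_subsets:
  "filterlim (\<lambda>N::nat. {..N} \<times> {..N}) (finite_subsets_at_top UNIV) sequentially"
  unfolding filterlim_finite_subsets_at_top
proof (intro allI impI)
  fix X :: "(nat \<times> nat) set" assume "finite X \<and> X \<subseteq> UNIV"
  then have "finite (insert 0 (fst ` X \<union> snd ` X))" by simp
  define M where "M = Max (insert 0 (fst ` X \<union> snd ` X))"
  have "X \<subseteq> {..N} \<times> {..N}" if "N \<ge> M" for N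
  proof
    fix x assume "x \<in> X"
    then have "fst x \<le> M" "snd x \<le> M"
      unfolding M_def using \<open>finite (insert 0 _)\<close> by (auto intro!: Max_ge)
    then show "x \<in> {..N} \<times> {..N}" using that by (cases x) auto
  qed
  then show "\<forall>\<^sub>F N in sequentially. finite ({..N} \<times> {..N}) \<and> X \<subseteq> {..N} \<times> {..N} \<and> {..N} \<times> {..N} \<subseteq> UNIV"
    unfolding eventually_sequentially by auto
qed

lemma h2_trunc_tendsto:
  assumes g: "g \<in> H2"
  shows "(\<lambda>N. h2_norm (\<lambda>k. h2_trunc N g k - g k)) \<longlonglongrightarrow> 0"
proof -
  let ?f = "\<lambda>k. (cmod (g k))\<^sup>2"
  have s: "?f summable_on UNIV" using H2_summable[OF g] .
  have eq: "h2_sqnorm (\<lambda>k. h2_trunc N g k - g k) = h2_sqnorm g - sum ?f ({..N} \<times> {..N})" for N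
  proof -
    let ?B = "{..N} \<times> {..N}"
    let ?out = "\<lambda>k. if k \<in> ?B then 0 else ?f k" and ?in = "\<lambda>k. if k \<in> ?B then ?f k else 0"
    have s_in: "?in summable_on UNIV"
      by (rule finite_nonzero_values_imp_summable_on) (auto elim: finite_subset[rotated, of _ ?B])
    have s_out: "?out summable_on UNIV"
      by (rule summable_on_comparison_test[OF s]) auto
    have "h2_sqnorm g = infsum ?out UNIV + infsum ?in UNIV"
      unfolding h2_sqnorm_def by (subst infsum_add[OF s_out s_in, symmetric]) (auto intro!: infsum_cong)
    moreover have "infsum ?in UNIV = sum ?f ?B"
      by (subst infsum_cong_neutral[where T="?B" and g="?f"]) auto
    moreover have "h2_sqnorm (\<lambda>k. h2_trunc N g k - g k) = infsum ?out UNIV"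
      unfolding h2_sqnorm_def h2_trunc_def by (rule infsum_cong) auto
    ultimately show ?thesis by simp
  qed
  have "(\<lambda>N. sum ?f ({..N} \<times> {..N})) \<longlonglongrightarrow> h2_sqnorm g"
    unfolding h2_sqnorm_def
    using filterlim_compose[OF infsum_tendsto[OF s] filterlim_squares_finite_subsets] by simp
  then have "(\<lambda>N. sqrt (h2_sqnorm g - sum ?f ({..N} \<times> {..N}))) \<longlonglongrightarrow> sqrt (h2_sqnorm g - h2_sqnorm g)"
    by (intro tendsto_intros)
  then show ?thesis unfolding h2_norm_eq_sqrt_sqnorm eq by simp
qed

section \<open>Submodules\<close>

lemma is_submodule_iff:
  "is_submodule S \<longleftrightarrow> h2_subspace S \<and> h2_closed S \<and> (\<forall>q\<in>poly2. \<forall>f\<in>S. h2_mult q f \<in> S)"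
  unfolding is_submodule_def h2_subspace_def h2_closed_def by blast

lemma
  assumes "is_submodule S"
  shows submodule_subspace: "h2_subspace S"
    and submodule_closed: "h2_closed S"
    and submodule_poly2_mult: "q \<in> poly2 \<Longrightarrow> f \<in> S \<Longrightarrow> h2_mult q f \<in> S"
  using assms unfolding is_submodule_iff by blast+

lemma is_submodule_H2: "is_submodule H2"
  unfolding is_submodule_iff h2_subspace_def h2_closed_def
  using H2_zero H2_add H2_scale poly2_mult_H2 by blast

lemma is_submodule_Inter:
  assumes "\<forall>S\<in>F. is_submodule S" "F \<noteq> {}"
  shows "is_submodule (\<Inter>F)"
proof -
  have "h2_closed (\<Inter>F)"
    unfolding h2_closed_def
  proof (intro allI impI)
    fix x f assume a: "(\<forall>n. x n \<in> \<Inter>F) \<and> f \<in> H2 \<and> (\<lambda>n. h2_norm (\<lambda>k. x n k - f k)) \<longlonglongrightarrow> 0"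
    show "f \<in> \<Inter>F"
    proof
      fix S assume "S \<in> F"
      then show "f \<in> S" using a assms(1) submodule_closed[of S] h2_closedD[of S x f] by blast
    qed
  qed
  moreover have "h2_subspace (\<Inter>F)"
    using assms submodule_subspace unfolding h2_subspace_def by blast
  ultimately show ?thesis
    unfolding is_submodule_iff using assms(1) submodule_poly2_mult by blast
qed

lemma
  assumes "G \<subseteq> H2"
  shows is_submodule_gen_submodule: "is_submodule (gen_submodule G)"
    and gen_submodule_generators: "G \<subseteq> gen_submodule G"
    and gen_submodule_least: "is_submodule S \<Longrightarrow> G \<subseteq> S \<Longrightarrow> gen_submodule G \<subseteq> S"
  unfolding gen_submodule_def
  using is_submodule_Inter[of "{S. is_submodule S \<and> G \<subseteq> S}"] is_submodule_H2 assms by blast+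

text \<open>Polynomials are dense in \<open>H^2\<close> and multiplication by \<open>p\<close> is continuous.\<close>
lemma submodule_mult_mem:
  assumes N: "is_submodule N" and p: "p \<in> poly2" "p \<in> N" and g: "g \<in> H2"
  shows "h2_mult p g \<in> N"
proof (rule h2_closedD[OF submodule_closed[OF N]])
  show "h2_mult p (h2_trunc n g) \<in> N" for n
    using submodule_poly2_mult[OF N h2_trunc_poly2 p(2)] h2_mult_commute by metis
  show "h2_mult p g \<in> H2" using poly2_mult_H2[OF p(1) g] .
  show "(\<lambda>n. h2_norm (\<lambda>k. h2_mult p (h2_trunc n g) k - h2_mult p g k)) \<longlonglongrightarrow> 0"
    by (rule h2_mult_tendsto[OF p(1) poly2_H2[OF h2_trunc_poly2] g h2_trunc_tendsto[OF g]])
qed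

lemma is_submodule_poly2_annihilator:
  assumes x: "x \<in> H2"
  shows "is_submodule {y \<in> H2. \<forall>q\<in>poly2. h2_inner x (h2_mult q y) = 0}"
    (is "is_submodule ?S")
  unfolding is_submodule_iff
proof (intro conjI ballI)
  show "h2_subspace ?S"
    unfolding h2_subspace_def
    using x H2_zero H2_add H2_scale poly2_mult_H2
    by (auto simp: h2_mult_zero_right h2_mult_add_right h2_mult_scale_right h2_inner_add_right
        h2_inner_scale_right)
  show "h2_closed ?S"
    unfolding h2_closed_def
  proof (intro allI impI)
    fix y f assume a: "(\<forall>n. y n \<in> ?S) \<and> f \<in> H2 \<and> (\<lambda>n. h2_norm (\<lambda>k. y n k - f k)) \<longlonglongrightarrow> 0"
    then have y: "\<And>n. y n \<in> H2" and f: "f \<in> H2" by auto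
    have "h2_inner x (h2_mult q f) = 0" if q: "q \<in> poly2" for q
    proof -
      have "(\<lambda>n. h2_inner x (h2_mult q (y n))) \<longlonglongrightarrow> h2_inner x (h2_mult q f)"
        using a by (intro h2_inner_tendsto_right h2_mult_tendsto poly2_mult_H2 q y f x) auto
      moreover have "(\<lambda>n. h2_inner x (h2_mult q (y n))) = (\<lambda>n. 0)" using a q by auto
      ultimately show ?thesis using LIMSEQ_unique tendsto_const by metis
    qed
    then show "f \<in> ?S" using f by blast
  qed
  fix q f assume "q \<in> poly2" "f \<in> ?S"
  then show "h2_mult q f \<in> ?S"
    using poly2_mult[OF _ \<open>q \<in> poly2\<close>] poly2_mult_H2 by (auto simp: h2_mult_assoc)
qed

text \<open>The vectors whose polynomial multiples are all orthogonal to \<open>x\<close> form a submodule; it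
  contains \<open>G\<close>, hence \<open>x\<close> itself.\<close>
lemma gen_submodule_orthogonal_eq_0:
  assumes G: "G \<subseteq> H2" and x: "x \<in> gen_submodule G"
    and orth: "\<forall>g\<in>G. \<forall>q\<in>poly2. h2_inner x (h2_mult q g) = 0"
  shows "x = (\<lambda>_. 0)"
proof -
  have xH: "x \<in> H2"
    using x submodule_subspace[OF is_submodule_gen_submodule[OF G]] h2_subspaceD(1) by blast
  have "gen_submodule G \<subseteq> {y \<in> H2. \<forall>q\<in>poly2. h2_inner x (h2_mult q y) = 0}"
    using G orth by (intro gen_submodule_least is_submodule_poly2_annihilator xH) auto
  then have "h2_inner x (h2_mult h2_one x) = 0" using x h2_one_poly2 by blast
  then show ?thesis using h2_inner_self_eq_0_iff[OF xH] by (simp add: h2_mult_one)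
qed

section \<open>The compression of \<open>M\<^sub>z\<close> to \<open>M \<ominus> N\<close>\<close>

lemma ominus_subspace:
  "h2_subspace M \<Longrightarrow> N \<subseteq> H2 \<Longrightarrow> h2_subspace (ominus M N)"
  unfolding ominus_def by (rule h2_subspace_orthogonal)

lemma ominus_closed:
  "h2_subspace M \<Longrightarrow> h2_closed M \<Longrightarrow> N \<subseteq> H2 \<Longrightarrow> h2_closed (ominus M N)"
  using h2_closed_orthogonal[of M N] h2_subspaceD(1)[of M] unfolding ominus_def by blast

definition z_backward_shift :: "h2 \<Rightarrow> h2" where
  "z_backward_shift x = (\<lambda>(m, n). x (m + 1, n))"

lemma zpoly_mult_eq_shift: "h2_mult zpoly y = h2_shift (1, 0) y"
proof -
  have "{k. zpoly k \<noteq> 0} = {(1, 0)}" by (auto simp: zpoly_def)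
  then show ?thesis using h2_mult_eq_sum_shifts[OF zpoly_poly2, of y] by (simp add: zpoly_def)
qed

lemma z_backward_shift_H2:
  assumes "x \<in> H2"
  shows "z_backward_shift x \<in> H2"
proof -
  define g where "g = (\<lambda>(m::nat, n::nat). (m + 1, n))"
  have inj: "inj_on g UNIV" unfolding g_def by (auto simp: inj_on_def)
  have "(\<lambda>k. (cmod (x k))\<^sup>2) summable_on range g"
    using summable_on_subset[OF H2_summable[OF assms]] by blast
  then have "((\<lambda>k. (cmod (x k))\<^sup>2) \<circ> g) summable_on UNIV"
    using summable_on_reindex[OF inj] by blast
  moreover have "(\<lambda>k. (cmod (x k))\<^sup>2) \<circ> g = (\<lambda>k. (cmod (z_backward_shift x k))\<^sup>2)"
    by (auto simp: g_def z_backward_shift_def)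
  ultimately show ?thesis unfolding H2_def by simp
qed

lemma h2_inner_zpoly_mult:
  "h2_inner (h2_mult zpoly y) x = h2_inner y (z_backward_shift x)"
proof -
  define g where "g = (\<lambda>(m::nat, n::nat). (m + 1, n))"
  have inj: "inj_on g UNIV" unfolding g_def by (auto simp: inj_on_def)
  let ?F = "\<lambda>k. h2_shift (1, 0) y k * cnj (x k)"
  have "h2_inner (h2_mult zpoly y) x = infsum ?F UNIV"
    unfolding h2_inner_def zpoly_mult_eq_shift ..
  also have "\<dots> = infsum ?F (range g)"
  proof (rule infsum_cong_neutral)
    fix k assume k: "k \<in> UNIV - range g"
    obtain m n where mn: "k = (m, n)" by (cases k)
    show "?F k = 0"
    proof (cases "m = 0")
      case False
      then have "k = g (m - 1, n)" unfolding mn g_def by simp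
      with k show ?thesis by blast
    qed (simp add: mn h2_shift_def)
  qed auto
  also have "\<dots> = infsum (?F \<circ> g) UNIV" by (rule infsum_reindex[OF inj])
  also have "?F \<circ> g = (\<lambda>k. y k * cnj (z_backward_shift x k))"
    by (auto simp: g_def h2_shift_def z_backward_shift_def)
  finally show ?thesis unfolding h2_inner_def .
qed

lemma adj_eqI:
  assumes Q: "h2_subspace Q" and u: "u \<in> Q" "\<forall>y\<in>Q. h2_inner (T y) x = h2_inner y u"
  shows "adj Q T x = u"
  unfolding adj_def
proof (rule the_equality)
  fix u' assume u': "u' \<in> Q \<and> (\<forall>y\<in>Q. h2_inner (T y) x = h2_inner y u')"
  define D where "D = (\<lambda>k. u' k - u k)"
  have D: "D \<in> Q" "D \<in> H2"
    unfolding D_def using h2_subspace_diff[OF Q] u u' h2_subspaceD(1)[OF Q] by auto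
  have H: "u \<in> H2" "u' \<in> H2" using u u' h2_subspaceD(1)[OF Q] by auto
  have "h2_inner D D = h2_inner D u' - h2_inner D u"
    unfolding D_def by (rule h2_inner_diff_right[OF H(2,1) D(2)[unfolded D_def]])
  also have "\<dots> = 0" using u u' D(1) by simp
  finally have "D = (\<lambda>_. 0)" using h2_inner_self_eq_0_iff[OF D(2)] by blast
  then show "u' = u" unfolding D_def by (simp add: fun_eq_iff)
qed (use u in blast)

lemma h2_inner_Tz:
  assumes Q: "h2_subspace Q" "h2_closed Q" and y: "y \<in> Q" and x: "x \<in> Q"
  shows "h2_inner (Tz Q y) x = h2_inner (h2_mult zpoly y) x"
proof -
  have H: "x \<in> H2" "y \<in> H2" using x y h2_subspaceD(1)[OF Q(1)] by auto
  then have zy: "h2_mult zpoly y \<in> H2" using poly2_mult_H2[OF zpoly_poly2] by blast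
  have "Tz Q y \<in> H2" unfolding Tz_def using proj_in[OF Q zy] h2_subspaceD(1)[OF Q(1)] by blast
  have "h2_inner (h2_mult zpoly y) x - h2_inner (Tz Q y) x
      = h2_inner (\<lambda>k. h2_mult zpoly y k - Tz Q y k) x"
    by (rule h2_inner_diff_left[OF zy \<open>Tz Q y \<in> H2\<close> H(1), symmetric])
  also have "\<dots> = 0" using proj_orthogonal[OF Q zy] x unfolding Tz_def by blast
  finally show ?thesis by simp
qed

lemma adj_Tz_eq_proj:
  assumes Q: "h2_subspace Q" "h2_closed Q" and x: "x \<in> Q"
  shows "adj Q (Tz Q) x = proj Q (z_backward_shift x)"
proof (rule adj_eqI[OF Q(1)])
  have H: "x \<in> H2" "z_backward_shift x \<in> H2"
    using x h2_subspaceD(1)[OF Q(1)] z_backward_shift_H2 by auto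
  show u: "proj Q (z_backward_shift x) \<in> Q" by (rule proj_in[OF Q H(2)])
  show "\<forall>y\<in>Q. h2_inner (Tz Q y) x = h2_inner y (proj Q (z_backward_shift x))"
  proof
    fix y assume y: "y \<in> Q"
    have yH: "y \<in> H2" "proj Q (z_backward_shift x) \<in> H2"
      using y u h2_subspaceD(1)[OF Q(1)] by auto
    have "h2_inner y (\<lambda>k. z_backward_shift x k - proj Q (z_backward_shift x) k) = 0"
      using proj_orthogonal[OF Q H(2)] y h2_inner_commute by (metis complex_cnj_zero)
    then show "h2_inner (Tz Q y) x = h2_inner y (proj Q (z_backward_shift x))"
      by (simp add: h2_inner_Tz[OF Q y x] h2_inner_zpoly_mult h2_inner_diff_right[OF H(2) yH(2) yH(1)])
  qed
qed

text \<open>\<open>T_z^* x = P_Q(M_z^* x)\<close>, so \<open>T_z^* x = 0\<close> says exactly that \<open>x\<close> is orthogonal to \<open>z Q\<close>.\<close>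
lemma kernel_adj_Tz_orthogonal:
  assumes Q: "h2_subspace Q" "h2_closed Q" and x: "x \<in> kernel_on Q (adj Q (Tz Q))" and y: "y \<in> Q"
  shows "h2_inner x (h2_mult zpoly y) = 0"
proof -
  have "x \<in> Q" using x unfolding kernel_on_def by blast
  then have H: "z_backward_shift x \<in> H2" using h2_subspaceD(1)[OF Q(1)] z_backward_shift_H2 by blast
  have "proj Q (z_backward_shift x) = (\<lambda>_. 0)"
    using x adj_Tz_eq_proj[OF Q \<open>x \<in> Q\<close>] unfolding kernel_on_def by simp
  then have "h2_inner (z_backward_shift x) y = 0" using proj_orthogonal[OF Q H] y by simp
  then show ?thesis using h2_inner_zpoly_mult[of y x] h2_inner_commute[of x] h2_inner_commute[of y]
    by simp
qed

text \<open>For \<open>N \<subseteq> M\<close>, splitting \<open>m \<in> M\<close> as \<open>(m - P_N m) + P_N m\<close> with \<open>m - P_N m \<in> M \<ominus> N\<close>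
  and \<open>z P_N m \<in> N\<close> shows that the kernel of \<open>T_z^*\<close> on \<open>M \<ominus> N\<close> is orthogonal to all of
  \<open>z M\<close>, not only to \<open>z (M \<ominus> N)\<close>.\<close>
lemma kernel_adj_Tz_subset:
  assumes M: "is_submodule M" and N: "is_submodule N" and NM: "N \<subseteq> M"
  defines "Q \<equiv> ominus M N"
  shows "kernel_on Q (adj Q (Tz Q)) \<subseteq> ominus M (N \<union> h2_mult zpoly ` M)"
proof
  have MH: "M \<subseteq> H2" and NH: "N \<subseteq> H2"
    using M N submodule_subspace h2_subspaceD(1) by blast+
  have Q: "h2_subspace Q" "h2_closed Q"
    unfolding Q_def using M N submodule_subspace submodule_closed NH
    by (blast intro: ominus_subspace ominus_closed)+
  fix x assume x: "x \<in> kernel_on Q (adj Q (Tz Q))"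
  then have xQ: "x \<in> Q" unfolding kernel_on_def by blast
  then have xM: "x \<in> M" and xN: "\<forall>y\<in>N. h2_inner x y = 0" and xH: "x \<in> H2"
    unfolding Q_def ominus_def using MH by auto
  have "h2_inner x (h2_mult zpoly m) = 0" if m: "m \<in> M" for m
  proof -
    have mH: "m \<in> H2" using m MH by blast
    define P where "P = proj N m"
    have P: "P \<in> N" "P \<in> H2" "\<forall>y\<in>N. h2_inner (\<lambda>k. m k - P k) y = 0"
      unfolding P_def using proj_in proj_orthogonal submodule_subspace[OF N] submodule_closed[OF N]
        mH NH by blast+
    have "(\<lambda>k. m k - P k) \<in> Q"
      unfolding Q_def ominus_def
      using h2_subspace_diff[OF submodule_subspace[OF M] m] P NM by blast
    then have "h2_inner x (h2_mult zpoly (\<lambda>k. m k - P k)) = 0"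
      by (rule kernel_adj_Tz_orthogonal[OF Q x])
    moreover have "h2_inner x (h2_mult zpoly P) = 0"
      using xN submodule_poly2_mult[OF N zpoly_poly2 P(1)] by blast
    moreover have "h2_mult zpoly m = (\<lambda>k. h2_mult zpoly (\<lambda>k. m k - P k) k + h2_mult zpoly P k)"
      by (simp flip: h2_mult_add_right)
    ultimately show ?thesis
      using h2_inner_add_right[OF poly2_mult_H2[OF zpoly_poly2 H2_diff[OF mH P(2)]]
          poly2_mult_H2[OF zpoly_poly2 P(2)] xH] by simp
  qed
  then show "x \<in> ominus M (N \<union> h2_mult zpoly ` M)"
    using xM xN unfolding ominus_def by blast
qed

section \<open>Division by \<open>p(0, w)\<close>\<close>

text \<open>For a polynomial \<open>q\<close>: \<open>q(0, w)\<close> as a polynomial in \<open>w\<close>, and the quotient \<open>(q - q(0, w)) / z\<close>.\<close>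
definition z0_slice :: "h2 \<Rightarrow> complex poly" where
  "z0_slice q = Abs_poly (\<lambda>n. q (0, n))"

definition z_quotient :: "h2 \<Rightarrow> h2" where
  "z_quotient q = (\<lambda>(m, n). q (m + 1, n))"

definition w_poly :: "complex poly \<Rightarrow> h2" where
  "w_poly P = (\<lambda>(m, n). if m = 0 then coeff P n else 0)"

definition w_monom :: "nat \<Rightarrow> h2" where
  "w_monom j = (\<lambda>k. if k = (0, j) then 1 else 0)"

lemma coeff_z0_slice:
  assumes "q \<in> poly2"
  shows "coeff (z0_slice q) n = q (0, n)"
proof -
  have fin: "finite (snd ` {k. q k \<noteq> 0})" using assms by (simp add: poly2_def)
  define B where "B = Max (insert 0 (snd ` {k. q k \<noteq> 0}))"
  have "q (0, i) = 0" if "i > B" for i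
  proof (rule ccontr)
    assume "q (0, i) \<noteq> 0"
    then have "i \<in> insert 0 (snd ` {k. q k \<noteq> 0})" by (auto intro: image_eqI[where x="(0, i)"])
    then have "i \<le> B" unfolding B_def using fin by (intro Max_ge) auto
    then show False using that by simp
  qed
  then have "coeff (Abs_poly (\<lambda>n. q (0, n))) = (\<lambda>n. q (0, n))"
    by (intro coeff_Abs_poly[of B]) auto
  then show ?thesis unfolding z0_slice_def by simp
qed

lemma z_quotient_poly2:
  assumes "q \<in> poly2"
  shows "z_quotient q \<in> poly2"
proof -
  have "{k. z_quotient q k \<noteq> 0} \<subseteq> (\<lambda>(m, n). (m - 1, n)) ` {k. q k \<noteq> 0}"
  proof
    fix k assume "k \<in> {k. z_quotient q k \<noteq> 0}"
    then obtain m n where "k = (m, n)" "q (m + 1, n) \<noteq> 0" by (cases k) (auto simp: z_quotient_def)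
    then show "k \<in> (\<lambda>(m, n). (m - 1, n)) ` {k. q k \<noteq> 0}"
      by (auto intro!: image_eqI[where x="(m + 1, n)"])
  qed
  moreover have "finite ((\<lambda>(m, n). (m - 1, n)) ` {k. q k \<noteq> 0})"
    using assms by (simp add: poly2_def)
  ultimately show ?thesis unfolding poly2_def by (auto intro: finite_subset)
qed

lemma w_poly_poly2: "w_poly P \<in> poly2"
proof -
  have "{k. w_poly P k \<noteq> 0} \<subseteq> {0} \<times> {..degree P}"
    by (auto simp: w_poly_def le_degree split: if_splits)
  then show ?thesis unfolding poly2_def by (auto intro: finite_subset)
qed

lemma w_monom_poly2: "w_monom j \<in> poly2"
  unfolding poly2_def w_monom_def by simp

lemma w_poly_eq_sum_monoms:
  assumes "\<And>j. j \<ge> d \<Longrightarrow> coeff R j = 0"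
  shows "w_poly R = (\<lambda>k. \<Sum>j<d. coeff R j * w_monom j k)"
proof (rule ext, clarify)
  fix m n
  have "(\<Sum>j<d. coeff R j * w_monom j (m, n))
      = (\<Sum>j<d. if j = n then (if m = 0 then coeff R j else 0) else 0)"
    by (rule sum.cong) (auto simp: w_monom_def)
  also have "\<dots> = w_poly R (m, n)" using assms by (auto simp: w_poly_def)
  finally show "w_poly R (m, n) = (\<Sum>j<d. coeff R j * w_monom j (m, n))" by simp
qed

lemma h2_to_fps_split:
  assumes "q \<in> poly2"
  shows "h2_to_fps q = fps_const (fps_of_poly (z0_slice q)) + fps_X * h2_to_fps (z_quotient q)"
  by (auto simp: fps_eq_iff h2_to_fps_def coeff_z0_slice[OF assms] z_quotient_def fps_X_mult_nth)

lemma h2_to_fps_w_poly: "h2_to_fps (w_poly P) = fps_const (fps_of_poly P)"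
  by (auto simp: fps_eq_iff w_poly_def h2_to_fps_def)

text \<open>Division of \<open>q(0, w)\<close> by \<open>p(0, w)\<close> in \<open>\<complex>[w]\<close>, \<open>q(0, w) = S p(0, w) + R\<close>, together
  with \<open>q = q(0, w) + z q'\<close> and \<open>p = p(0, w) + z p'\<close> gives
  \<open>q f = z (q' f) + p (S f) - z (S p' f) + R f\<close>.\<close>
lemma poly2_mult_division_in_w:
  assumes q: "q \<in> poly2" and p: "p \<in> poly2"
  defines "S \<equiv> z0_slice q div z0_slice p" and "R \<equiv> z0_slice q mod z0_slice p"
  shows "h2_mult q f = (\<lambda>k. h2_mult zpoly (h2_mult (z_quotient q) f) k
      + h2_mult p (h2_mult (w_poly S) f) k
      - h2_mult zpoly (h2_mult (h2_mult (w_poly S) (z_quotient p)) f) k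
      + h2_mult (w_poly R) f k)"
proof (rule h2_to_fps_inject)
  have "z0_slice q = S * z0_slice p + R" unfolding S_def R_def by simp
  then have c0: "fps_const (fps_of_poly (z0_slice q))
      = fps_const (fps_of_poly S) * fps_const (fps_of_poly (z0_slice p)) + fps_const (fps_of_poly R)"
    by (simp add: fps_of_poly_mult fps_of_poly_add fps_const_add fps_const_mult)
  then show "h2_to_fps (h2_mult q f) = h2_to_fps (\<lambda>k. h2_mult zpoly (h2_mult (z_quotient q) f) k
      + h2_mult p (h2_mult (w_poly S) f) k
      - h2_mult zpoly (h2_mult (h2_mult (w_poly S) (z_quotient p)) f) k
      + h2_mult (w_poly R) f k)"
    unfolding h2_to_fps_add h2_to_fps_diff h2_to_fps_mult h2_to_fps_zpoly h2_to_fps_w_poly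
      h2_to_fps_split[OF q] h2_to_fps_split[OF p] c0
    by (simp add: algebra_simps flip: fps_const_add fps_const_mult)
qed

lemma h2_inner_w_poly_mult_eq_0:
  assumes f: "f \<in> H2" and x: "x \<in> H2" and R: "\<And>j. j \<ge> d \<Longrightarrow> coeff R j = 0"
    and x_orth: "\<forall>j < d. h2_inner x (h2_mult (w_monom j) f) = 0"
  shows "h2_inner x (h2_mult (w_poly R) f) = 0"
proof -
  have "w_poly R = (\<lambda>k. \<Sum>j<d. coeff R j * w_monom j k)"
    by (rule w_poly_eq_sum_monoms[OF R])
  then have "h2_mult (w_poly R) f = (\<lambda>k. \<Sum>j<d. coeff R j * h2_mult (w_monom j) f k)"
    using h2_mult_sum_left[of "{..<d}" "coeff R" w_monom f] by simp
  then have "h2_inner x (h2_mult (w_poly R) f)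
      = (\<Sum>j<d. cnj (coeff R j) * h2_inner x (h2_mult (w_monom j) f))"
    using h2_inner_sum_right[of "{..<d}" "\<lambda>j. h2_mult (w_monom j) f" x "coeff R"]
      poly2_mult_H2[OF w_monom_poly2 f] x by simp
  then show ?thesis using x_orth by simp
qed

lemma orthogonal_poly2_mult_generator:
  assumes M: "is_submodule M" and N: "is_submodule N"
    and p: "p \<in> poly2" "p \<in> N" "z0_slice p \<noteq> 0"
    and f: "f \<in> M" and x: "x \<in> ominus M (N \<union> h2_mult zpoly ` M)"
    and x_orth: "\<forall>j < degree (z0_slice p). h2_inner x (h2_mult (w_monom j) f) = 0"
    and q: "q \<in> poly2"
  shows "h2_inner x (h2_mult q f) = 0"
proof -
  define S where "S = z0_slice q div z0_slice p"
  define R where "R = z0_slice q mod z0_slice p"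
  have MH: "M \<subseteq> H2" using submodule_subspace[OF M] h2_subspaceD(1) by blast
  have fH: "f \<in> H2" and xH: "x \<in> H2" using f x MH unfolding ominus_def by auto
  have xN: "h2_inner x y = 0" if "y \<in> N" for y using x that unfolding ominus_def by blast
  have xz: "h2_inner x (h2_mult zpoly m) = 0" if "m \<in> M" for m
    using x that unfolding ominus_def by blast
  define T1 where "T1 = h2_mult zpoly (h2_mult (z_quotient q) f)"
  define T2 where "T2 = h2_mult p (h2_mult (w_poly S) f)"
  define T3 where "T3 = h2_mult zpoly (h2_mult (h2_mult (w_poly S) (z_quotient p)) f)"
  define T4 where "T4 = h2_mult (w_poly R) f"
  have m1: "h2_mult (z_quotient q) f \<in> M"
    by (rule submodule_poly2_mult[OF M z_quotient_poly2[OF q] f])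
  have m3: "h2_mult (h2_mult (w_poly S) (z_quotient p)) f \<in> M"
    by (rule submodule_poly2_mult[OF M poly2_mult[OF w_poly_poly2 z_quotient_poly2[OF p(1)]] f])
  have Sf: "h2_mult (w_poly S) f \<in> H2" by (rule poly2_mult_H2[OF w_poly_poly2 fH])
  have H: "T1 \<in> H2" "T2 \<in> H2" "T3 \<in> H2" "T4 \<in> H2"
    unfolding T1_def T2_def T3_def T4_def
    using m1 m3 MH poly2_mult_H2[OF zpoly_poly2] poly2_mult_H2[OF p(1) Sf]
      poly2_mult_H2[OF w_poly_poly2 fH] by auto
  have "h2_inner x T1 = 0" "h2_inner x T3 = 0" unfolding T1_def T3_def using xz m1 m3 by auto
  moreover have "h2_inner x T2 = 0"
    unfolding T2_def using xN submodule_mult_mem[OF N p(1,2) Sf] by blast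
  moreover have "h2_inner x T4 = 0"
  proof -
    have "coeff R j = 0" if "j \<ge> degree (z0_slice p)" for j
      using degree_mod_less[OF p(3), of "z0_slice q"] that unfolding R_def
      by (cases "R = 0") (auto simp: R_def intro!: coeff_eq_0)
    then show ?thesis unfolding T4_def by (rule h2_inner_w_poly_mult_eq_0[OF fH xH _ x_orth])
  qed
  moreover have "h2_mult q f = (\<lambda>k. (T1 k + T2 k - T3 k) + T4 k)"
    unfolding T1_def T2_def T3_def T4_def S_def R_def by (rule poly2_mult_division_in_w[OF q p(1)])
  moreover have "h2_inner x (\<lambda>k. (T1 k + T2 k - T3 k) + T4 k)
      = (h2_inner x T1 + h2_inner x T2 - h2_inner x T3) + h2_inner x T4"
    using H xH H2_add[OF H(1,2)] H2_diff[OF H2_add[OF H(1,2)] H(3)]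
    by (simp only: h2_inner_add_right h2_inner_diff_right)
  ultimately show ?thesis by simp
qed

section \<open>The kernel of \<open>T\<^sub>z\<^sup>*\<close>\<close>

lemma gen_submodule_insert_poly2:
  assumes p: "p \<in> poly2" and F: "F \<subseteq> H2"
  shows "is_submodule (gen_submodule (insert p F))" "is_submodule (gen_submodule {p})"
    "p \<in> gen_submodule {p}" "F \<subseteq> gen_submodule (insert p F)"
    "gen_submodule {p} \<subseteq> gen_submodule (insert p F)"
proof -
  have G: "insert p F \<subseteq> H2" and pH: "{p} \<subseteq> H2" using poly2_H2[OF p] F by auto
  show M: "is_submodule (gen_submodule (insert p F))" by (rule is_submodule_gen_submodule[OF G])
  show "is_submodule (gen_submodule {p})" by (rule is_submodule_gen_submodule[OF pH])
  show "p \<in> gen_submodule {p}" using gen_submodule_generators[OF pH] by blast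
  show "F \<subseteq> gen_submodule (insert p F)" using gen_submodule_generators[OF G] by blast
  show "gen_submodule {p} \<subseteq> gen_submodule (insert p F)"
    using gen_submodule_least[OF pH M] gen_submodule_generators[OF G] by blast
qed

lemma ominus_orthogonal_generators_eq_0:
  assumes p: "p \<in> poly2" "z0_slice p \<noteq> 0" and fs: "F \<subseteq> H2"
  defines "M \<equiv> gen_submodule (insert p F)" and "N \<equiv> gen_submodule {p}"
  assumes x: "x \<in> ominus M (N \<union> h2_mult zpoly ` M)"
    and x_orth: "\<forall>f\<in>F. \<forall>j < degree (z0_slice p). h2_inner x (h2_mult (w_monom j) f) = 0"
  shows "x = (\<lambda>_. 0)"
proof -
  have GH: "insert p F \<subseteq> H2" using poly2_H2[OF p(1)] fs by auto
  note gen = gen_submodule_insert_poly2[OF p(1) fs, folded M_def N_def]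
  note M = gen(1) and N = gen(2) and pN = gen(3) and FM = gen(4)
  show ?thesis
  proof (rule gen_submodule_orthogonal_eq_0[OF GH])
    show "x \<in> gen_submodule (insert p F)" using x unfolding M_def ominus_def by blast
    show "\<forall>g\<in>insert p F. \<forall>q\<in>poly2. h2_inner x (h2_mult q g) = 0"
    proof (intro ballI)
      fix g q assume g: "g \<in> insert p F" and q: "q \<in> poly2"
      show "h2_inner x (h2_mult q g) = 0"
      proof (cases "g = p")
        case True
        then show ?thesis using x submodule_poly2_mult[OF N q pN] unfolding ominus_def by blast
      next
        case False
        then have "g \<in> M" "\<forall>j < degree (z0_slice p). h2_inner x (h2_mult (w_monom j) g) = 0"
          using g FM x_orth by auto
        then show ?thesis by (rule orthogonal_poly2_mult_generator[OF M N p(1) pN p(2) _ x _ q])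
      qed
    qed
  qed
qed

lemma zero_one_in_frontier_bidisc: "(0, 1) \<in> frontier bidisc"
proof -
  define r where "r n = 1 - inverse (real (Suc n)) / 2" for n
  define s where "s n = (0 :: complex, complex_of_real (r n))" for n
  have "0 < r n \<and> r n < 1" for n
  proof -
    have "0 < inverse (real (Suc n))" "inverse (real (Suc n)) \<le> 1"
      by (simp_all add: inverse_le_1_iff)
    then show ?thesis unfolding r_def by linarith
  qed
  then have "s n \<in> bidisc" for n using abs_less_iff unfolding s_def bidisc_def by fastforce
  moreover have "s \<longlonglongrightarrow> (0, complex_of_real (1 - 0 / 2))"
    unfolding s_def r_def by (intro tendsto_intros LIMSEQ_inverse_real_of_nat) simp
  ultimately have "(0, 1) \<in> closure bidisc" unfolding closure_sequential by force
  moreover have "(0, 1) \<notin> interior bidisc" using interior_subset[of bidisc] by (auto simp: bidisc_def)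
  ultimately show ?thesis unfolding frontier_def by blast
qed

text \<open>\<open>p(0, 1) \<noteq> 0\<close> because \<open>(0, 1)\<close> lies in \<open>Z(z) \<inter> \<partial>\<bbbD>\<^sup>2\<close>, so \<open>p(0, w)\<close> is not the zero polynomial.\<close>
lemma z0_slice_nonzero:
  assumes p: "p \<in> poly2" and Z: "Zset p \<inter> {zw. fst zw = 0} \<inter> frontier bidisc = {}"
  shows "z0_slice p \<noteq> 0"
proof
  assume z: "z0_slice p = 0"
  have "p (a, b) * 0 ^ a = 0" for a b
    using coeff_z0_slice[OF p, of b] z by (cases a) auto
  then have "\<forall>k\<in>{k. p k \<noteq> 0}.
      p k * fst (0 :: complex, 1 :: complex) ^ fst k * snd (0 :: complex, 1 :: complex) ^ snd k = 0"
    by (metis fst_conv mult_1_right power_one prod.collapse snd_conv)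
  then have "poly2_eval p (0, 1) = 0" unfolding poly2_eval_def by (rule sum.neutral)
  then show False using Z zero_one_in_frontier_bidisc unfolding Zset_def by auto
qed

lemma fin_dim_orthogonal_z_mult:
  assumes p: "p \<in> poly2" "z0_slice p \<noteq> 0" and F: "finite F" "F \<subseteq> H2"
  defines "M \<equiv> gen_submodule (insert p F)" and "N \<equiv> gen_submodule {p}"
  shows "fin_dim (ominus M (N \<union> h2_mult zpoly ` M))"
proof (rule fin_dim_if_orthogonal_trivial)
  define W where "W = (\<lambda>(j, f). h2_mult (w_monom j) f) ` ({..<degree (z0_slice p)} \<times> F)"
  note gen = gen_submodule_insert_poly2[OF p(1) F(2), folded M_def N_def]
  show "finite W" "W \<subseteq> H2"
    unfolding W_def using F poly2_mult_H2[OF w_monom_poly2] by auto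
  show "h2_subspace (ominus M (N \<union> h2_mult zpoly ` M))"
    using submodule_subspace[OF gen(1)] submodule_subspace[OF gen(2)] h2_subspaceD(1)
      poly2_mult_H2[OF zpoly_poly2] by (intro ominus_subspace) blast+
  show "\<forall>x\<in>ominus M (N \<union> h2_mult zpoly ` M). (\<forall>g\<in>W. h2_inner x g = 0) \<longrightarrow> x = (\<lambda>_. 0)"
  proof (intro ballI impI)
    fix x assume x: "x \<in> ominus M (N \<union> h2_mult zpoly ` M)" and "\<forall>g\<in>W. h2_inner x g = 0"
    then have "\<forall>f\<in>F. \<forall>j < degree (z0_slice p). h2_inner x (h2_mult (w_monom j) f) = 0"
      unfolding W_def by auto
    with x show "x = (\<lambda>_. 0)" unfolding M_def N_def
      by (rule ominus_orthogonal_generators_eq_0[OF p F(2)])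
  qed
qed

theorem lemma4p1:
  fixes p :: h2 and fs :: "h2 list"
  assumes "p \<in> poly2"
    and "set fs \<subseteq> H2"
    and "Zset p \<inter> {zw. fst zw = 0} \<inter> frontier bidisc = {}"
  shows "fin_dim (kernel_on
           (ominus (gen_submodule (insert p (set fs))) (gen_submodule {p}))
           (adj (ominus (gen_submodule (insert p (set fs))) (gen_submodule {p}))
                (Tz (ominus (gen_submodule (insert p (set fs))) (gen_submodule {p})))))"
proof -
  define M where "M = gen_submodule (insert p (set fs))"
  define N where "N = gen_submodule {p}"
  note gen = gen_submodule_insert_poly2[OF assms(1,2), folded M_def N_def]
  have "fin_dim (ominus M (N \<union> h2_mult zpoly ` M))"
    unfolding M_def N_def
    by (rule fin_dim_orthogonal_z_mult[OF assms(1) z0_slice_nonzero[OF assms(1,3)] finite_set assms(2)])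
  from fin_dim_mono[OF this kernel_adj_Tz_subset[OF gen(1,2,5)]]
  show ?thesis unfolding M_def N_def .
qed

end
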